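(* Let $\mu$ be an isotropic log-concave probability measure on $\mathbb{R}^n$. Then for every convex body $A\subset\mathbb{R}^n$, $\mu(A)\leq w_A$.
   Context: A probability measure on $\mathbb{R}^n$ is log-concave (full-dimensional) if it has a density $f$ with $\ln f$ concave; it is isotropic if its barycenter is $0$ and its covariance matrix is the identity. A convex body is a compact convex set with nonempty interior. The support function is $h_A(\xi)=\max_{y\in A}\langle \xi,y\rangle$, the width in direction $\xi\in S^{n-1}$ is $w_A(\xi)=h_A(\xi)+h_A(-\xi)$, and the minimal width is $w_A=\min_{\xi\in S^{n-1}} w_A(\xi)$. *)

theory Defs
  imports "HOL-Analysis.Analysis"
begin

text \<open>A density f on a Euclidean space is log-concave if it is nonnegative, Borel measurable,
  and ln f is concave (with ln 0 = -infinity), i.e.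
  f((1-t)x + t y) >= f(x)^(1-t) f(y)^t for all x, y and 0 < t < 1.\<close>
definition log_concave_density :: "('a::euclidean_space \<Rightarrow> real) \<Rightarrow> bool" where
  "log_concave_density f \<longleftrightarrow>
     f \<in> borel_measurable lborel \<and> (\<forall>x. 0 \<le> f x) \<and>
     (\<forall>x y. \<forall>t\<in>{0<..<1}. f x powr (1 - t) * f y powr t \<le> f ((1 - t) *\<^sub>R x + t *\<^sub>R y))"

definition isotropic_density :: "('a::euclidean_space \<Rightarrow> real) \<Rightarrow> bool" where
  "isotropic_density f \<longleftrightarrow>
     integrable lborel f \<and> integral\<^sup>L lborel f = 1 \<and>
     (\<forall>i\<in>Basis. integrable lborel (\<lambda>x. (x \<bullet> i) * f x) \<and>
                 integral\<^sup>L lborel (\<lambda>x. (x \<bullet> i) * f x) = 0) \<and>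
     (\<forall>i\<in>Basis. \<forall>j\<in>Basis. integrable lborel (\<lambda>x. (x \<bullet> i) * (x \<bullet> j) * f x) \<and>
                 integral\<^sup>L lborel (\<lambda>x. (x \<bullet> i) * (x \<bullet> j) * f x) = (if i = j then 1 else 0))"

definition convex_body :: "'a::euclidean_space set \<Rightarrow> bool" where
  "convex_body A \<longleftrightarrow> compact A \<and> convex A \<and> interior A \<noteq> {}"

definition support_fun :: "'a::euclidean_space set \<Rightarrow> 'a \<Rightarrow> real" where
  "support_fun A \<xi> = (SUP y\<in>A. \<xi> \<bullet> y)"

definition width :: "'a::euclidean_space set \<Rightarrow> 'a \<Rightarrow> real" where
  "width A \<xi> = support_fun A \<xi> + support_fun A (- \<xi>)"

definition min_width :: "'a::euclidean_space set \<Rightarrow> real" where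
  "min_width A = (INF \<xi>\<in>sphere 0 1. width A \<xi>)"

end

theory Submission
  imports Defs
begin

text \<open>Project \<open>\<mu>\<close> to the line along a unit vector \<open>\<xi>\<close>. By Pr\'ekopa's theorem (marginals of
  log-concave functions are log-concave, which follows coordinate by coordinate from the
  one-dimensional Pr\'ekopa--Leindler inequality) the image of \<open>\<mu>\<close> under \<open>x \<mapsto> x \<bullet> \<xi>\<close> has a
  log-concave density \<open>g\<close>, and it is again isotropic. An isotropic log-concave density on the line
  is bounded by \<open>1\<close>: at a point \<open>x\<^sub>0\<close> the monotonicity of the hazard rate and the NBUE property
  bound the tail masses and the first and second tail moments on either side of \<open>x\<^sub>0\<close> in terms of
  \<open>g x\<^sub>0\<close>, and the identity \<open>Var = 1\<close> then forces \<open>g x\<^sub>0 \<le> 1\<close>. Finally \<open>A\<close> lies in a slab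
  \<open>{x. x \<bullet> \<xi> \<in> I}\<close> with \<open>|I| = w\<^sub>A(\<xi>)\<close>, so \<open>\<mu>(A) \<le> \<integral>\<^sub>I g \<le> w\<^sub>A(\<xi>)\<close>.\<close>

section \<open>Real powers of extended nonnegative reals\<close>

text \<open>\<open>\<infinity>\<^sup>s = \<infinity>\<close>, although \<open>enn2real \<infinity> = 0\<close>; only exponents \<open>0 < s < 1\<close> occur.\<close>
definition enn_powr :: "ennreal \<Rightarrow> real \<Rightarrow> ennreal" where
  "enn_powr x s = (if x = top then top else ennreal (enn2real x powr s))"

lemma enn_powr_ennreal: "0 \<le> a \<Longrightarrow> enn_powr (ennreal a) s = ennreal (a powr s)"
  by (simp add: enn_powr_def)

lemma enn_powr_0 [simp]: "enn_powr 0 s = 0"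
  by (simp add: enn_powr_def)

lemma enn_powr_top [simp]: "enn_powr top s = top"
  by (simp add: enn_powr_def)

lemma enn_powr_pos: "x \<noteq> 0 \<Longrightarrow> enn_powr x s > 0"
  by (cases x rule: ennreal_cases) (auto simp: enn_powr_def)

lemma enn_powr_strict_mono:
  assumes "x < y" "0 < s"
  shows "enn_powr x s < enn_powr y s"
proof (cases y rule: ennreal_cases)
  case top
  then have "x \<noteq> top" using assms by auto
  then show ?thesis using top by (auto simp: enn_powr_def)
next
  case (real q)
  then obtain p where "x = ennreal p" "0 \<le> p" "p < q"
    using assms by (metis ennreal_cases ennreal_less_iff ennreal_less_top less_trans top.not_eq_extremum)
  moreover have "p powr s < q powr s" using \<open>0 \<le> p\<close> \<open>p < q\<close> assms by (intro powr_less_mono2) auto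
  ultimately show ?thesis using real assms by (auto simp: enn_powr_def intro!: ennreal_lessI)
qed

lemma enn_powr_mult_ennreal:
  assumes "0 < a"
  shows "enn_powr (ennreal a * X) s = ennreal (a powr s) * enn_powr X s"
proof (cases X rule: ennreal_cases)
  case top
  then show ?thesis using assms by (simp add: ennreal_mult_top)
next
  case (real x)
  then show ?thesis using assms
    by (simp add: enn_powr_def ennreal_mult'[symmetric] powr_mult del: ennreal_mult' ennreal_mult)
qed

lemma enn_powr_tendsto:
  assumes X: "X \<longlonglongrightarrow> L" and s: "0 < s"
  shows "(\<lambda>n. enn_powr (X n) s) \<longlonglongrightarrow> enn_powr L s"
proof (cases L rule: ennreal_cases)
  case top
  show ?thesis unfolding top enn_powr_top
  proof (rule order_tendstoI)
    fix y :: ennreal assume "y < top"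
    then obtain r where r: "y = ennreal r" "0 \<le> r" by (metis ennreal_cases less_irrefl)
    define M where "M = (r + 1) powr (1 / s)"
    have "eventually (\<lambda>n. ennreal M < X n) sequentially"
      using order_tendstoD(1)[OF X[unfolded top]] by simp
    then show "eventually (\<lambda>n. y < enn_powr (X n) s) sequentially"
    proof eventually_elim
      case (elim n)
      have "y < ennreal (r + 1)" using r by (simp add: ennreal_lessI)
      also have "ennreal (r + 1) = enn_powr (ennreal M) s"
        using r s by (simp add: enn_powr_ennreal M_def powr_powr)
      also have "\<dots> < enn_powr (X n) s" using elim s by (intro enn_powr_strict_mono)
      finally show ?case .
    qed
  qed simp
next
  case (real l)
  have "eventually (\<lambda>n. X n < top) sequentially"
    using order_tendstoD(2)[OF X, of top] real by simp
  then have "eventually (\<lambda>n. ennreal (enn2real (X n) powr s) = enn_powr (X n) s) sequentially"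
    by eventually_elim (auto simp: enn_powr_def)
  moreover have "(\<lambda>n. ennreal (enn2real (X n) powr s)) \<longlonglongrightarrow> ennreal (enn2real L powr s)"
    using s X real by (intro tendsto_ennrealI tendsto_powr' tendsto_enn2real tendsto_const) auto
  ultimately have "(\<lambda>n. enn_powr (X n) s) \<longlonglongrightarrow> ennreal (enn2real L powr s)"
    by (rule Lim_transform_eventually[rotated])
  then show ?thesis using real by (simp add: enn_powr_def)
qed

lemma enn_powr_Youngs_inequality:
  assumes t: "0 < t" "t < 1"
  shows "enn_powr x (1 - t) * enn_powr y t \<le> ennreal (1 - t) * x + ennreal t * y"
proof (cases "x = top \<or> y = top")
  case True
  then show ?thesis
    using t by (cases "x = 0 \<or> y = 0") (auto simp: ennreal_mult_top ennreal_top_mult)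
next
  case False
  then obtain a b where ab: "x = ennreal a" "y = ennreal b" "0 \<le> a" "0 \<le> b"
    by (metis ennreal_cases top.not_eq_extremum)
  have "a powr (1 - t) * b powr t \<le> (1 - t) * a + t * b"
    using Youngs_inequality_0[of "1 - t" t a b] ab t by (cases "a = 0 \<or> b = 0") auto
  then show ?thesis using ab t
    by (simp add: enn_powr_def ennreal_mult'[symmetric] ennreal_plus[symmetric] del: ennreal_plus)
qed


section \<open>The Brunn--Minkowski inequality on the line\<close>

lemma emeasure_lborel_real_affine_vimage:
  fixes S :: "real set"
  assumes [measurable]: "S \<in> sets borel" and c: "c \<noteq> 0"
  shows "emeasure lborel S = ennreal \<bar>c\<bar> * emeasure lborel {x. t + c * x \<in> S}"
proof -
  have "emeasure lborel S = (\<integral>\<^sup>+x. indicator S x \<partial>lborel)"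
    by simp
  also have "\<dots> = ennreal \<bar>c\<bar> * (\<integral>\<^sup>+x. indicator S (t + c * x) \<partial>lborel)"
    using c by (intro nn_integral_real_affine) auto
  also have "(\<integral>\<^sup>+x. indicator S (t + c * x) \<partial>lborel) = (\<integral>\<^sup>+x. indicator {x. t + c * x \<in> S} x \<partial>lborel)"
    by (intro nn_integral_cong) (simp split: split_indicator)
  also have "\<dots> = emeasure lborel {x. t + c * x \<in> S}"
    by (intro nn_integral_indicator) measurable
  finally show ?thesis .
qed

lemma emeasure_lborel_translate:
  fixes S :: "real set"
  assumes "S \<in> sets borel"
  shows "emeasure lborel {x. x + c \<in> S} = emeasure lborel S"
  using emeasure_lborel_real_affine_vimage[OF assms, of 1 c] by (simp add: add.commute)

lemma emeasure_lborel_dilate: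
  fixes S :: "real set"
  assumes "0 < c" "S \<in> sets borel"
  shows "emeasure lborel {u. u / c \<in> S} = ennreal c * emeasure lborel S"
proof -
  have "ennreal c * emeasure lborel S = ennreal c * (ennreal (1 / c) * emeasure lborel {u. 0 + (1 / c) * u \<in> S})"
    using emeasure_lborel_real_affine_vimage[OF assms(2), of "1 / c" 0] \<open>0 < c\<close> by simp
  also have "\<dots> = emeasure lborel {u. u / c \<in> S}"
    using \<open>0 < c\<close> by (simp add: ennreal_mult'[symmetric] mult.assoc[symmetric] del: ennreal_mult')
  finally show ?thesis ..
qed

lemma emeasure_below_plus_above_le_sumset:
  fixes A B C :: "real set"
  assumes sets: "A \<in> sets borel" "B \<in> sets borel" "C \<in> sets borel"
    and sub: "\<And>a b. a \<in> A \<Longrightarrow> b \<in> B \<Longrightarrow> a + b \<in> C"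
    and ab: "a \<in> A" "b \<in> B"
  shows "emeasure lborel (A \<inter> {..<a}) + emeasure lborel (B \<inter> {b..}) \<le> emeasure lborel C"
proof -
  have "emeasure lborel (A \<inter> {..<a}) = emeasure lborel {x. x + (- b) \<in> A \<inter> {..<a}}"
    using sets by (intro emeasure_lborel_translate[symmetric]) auto
  also have "\<dots> \<le> emeasure lborel (C \<inter> {..<a + b})"
    using sets sub[of _ b] ab by (intro emeasure_mono) (auto, metis add_diff_cancel diff_add_cancel)
  finally have below: "emeasure lborel (A \<inter> {..<a}) \<le> emeasure lborel (C \<inter> {..<a + b})" .
  have "emeasure lborel (B \<inter> {b..}) = emeasure lborel {x. x + (- a) \<in> B \<inter> {b..}}"
    using sets by (intro emeasure_lborel_translate[symmetric]) auto
  also have "\<dots> \<le> emeasure lborel (C \<inter> {a + b..})"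
    using sets sub[of a] ab by (intro emeasure_mono) (auto, metis add.commute diff_add_cancel)
  finally have above: "emeasure lborel (B \<inter> {b..}) \<le> emeasure lborel (C \<inter> {a + b..})" .
  have "emeasure lborel (C \<inter> {..<a + b}) + emeasure lborel (C \<inter> {a + b..}) =
        emeasure lborel ((C \<inter> {..<a + b}) \<union> (C \<inter> {a + b..}))"
    using sets by (intro plus_emeasure) auto
  also have "(C \<inter> {..<a + b}) \<union> (C \<inter> {a + b..}) = C" by auto
  finally show ?thesis using below above by (metis add_mono)
qed

lemma SUP_emeasure_below_eq:
  fixes A :: "real set"
  assumes A: "A \<in> sets borel" "A \<noteq> {}"
  shows "(SUP a\<in>A. emeasure lborel (A \<inter> {..<a})) = emeasure lborel A" (is "?S = _")
proof (rule antisym)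
  show "?S \<le> emeasure lborel A"
    using A by (intro SUP_least emeasure_mono) auto
next
  show "emeasure lborel A \<le> ?S"
  proof (cases "bdd_above A")
    case False
    have "emeasure lborel A = emeasure lborel (\<Union>n. A \<inter> {..<real n})"
      by (rule arg_cong[where f="emeasure lborel"]) (auto, meson reals_Archimedean2)
    also have "\<dots> = (SUP n. emeasure lborel (A \<inter> {..<real n}))"
      using A by (intro SUP_emeasure_incseq[symmetric]) (auto simp: incseq_def)
    also have "\<dots> \<le> ?S"
    proof (rule SUP_least)
      fix n :: nat
      from False obtain a where a: "a \<in> A" "a > real n"
        by (meson bdd_above.unfold linorder_not_le)
      then have "emeasure lborel (A \<inter> {..<real n}) \<le> emeasure lborel (A \<inter> {..<a})"
        using A by (intro emeasure_mono) auto
      also have "\<dots> \<le> ?S" using a by (intro SUP_upper) auto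
      finally show "emeasure lborel (A \<inter> {..<real n}) \<le> ?S" .
    qed
    finally show ?thesis .
  next
    case True
    show ?thesis
    proof (rule ennreal_le_epsilon)
      fix e :: real assume e: "0 < e"
      obtain a where a: "a \<in> A" "Sup A - e < a"
        using less_cSupE[of "Sup A - e" A] A e by auto
      have "A \<subseteq> (A \<inter> {..<a}) \<union> {a..Sup A}"
        using True cSup_upper by fastforce
      then have "emeasure lborel A \<le> emeasure lborel ((A \<inter> {..<a}) \<union> {a..Sup A})"
        using A by (intro emeasure_mono) auto
      also have "\<dots> \<le> emeasure lborel (A \<inter> {..<a}) + emeasure lborel {a..Sup A}"
        using A by (intro emeasure_subadditive) auto
      also have "emeasure lborel {a..Sup A} = ennreal (Sup A - a)"
        using True a by (simp add: cSup_upper)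
      also have "\<dots> \<le> ennreal e" using a by (intro ennreal_leI) auto
      also have "emeasure lborel (A \<inter> {..<a}) \<le> ?S" using a by (intro SUP_upper) auto
      finally show "emeasure lborel A \<le> ?S + ennreal e" by (simp add: add_mono)
    qed
  qed
qed

lemma SUP_emeasure_above_eq:
  fixes B :: "real set"
  assumes B: "B \<in> sets borel" "B \<noteq> {}"
  shows "(SUP b\<in>B. emeasure lborel (B \<inter> {b..})) = emeasure lborel B" (is "?S = _")
proof (rule antisym)
  show "?S \<le> emeasure lborel B"
    using B by (intro SUP_least emeasure_mono) auto
next
  let ?B = "uminus -` B"
  have reflect: "emeasure lborel (uminus -` S) = emeasure lborel S" if "S \<in> sets borel" for S :: "real set"
    using emeasure_lborel_real_affine_vimage[OF that, of "-1" 0] by (simp add: vimage_def)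
  have B'1: "?B \<in> sets borel"
    using B by (auto simp: measurable_sets_borel[OF borel_measurable_uminus[OF measurable_ident_sets[OF refl]]])
  obtain b0 where "b0 \<in> B" using B by auto
  then have "- b0 \<in> ?B" by simp
  then have B': "?B \<in> sets borel" "?B \<noteq> {}" using B'1 by blast+
  have "emeasure lborel B = emeasure lborel ?B" using reflect[OF B(1)] by simp
  also have "\<dots> = (SUP c\<in>?B. emeasure lborel (?B \<inter> {..<c}))" using SUP_emeasure_below_eq[OF B'] by simp
  also have "\<dots> \<le> ?S"
  proof (rule SUP_least)
    fix c assume c: "c \<in> ?B"
    have "emeasure lborel (?B \<inter> {..<c}) = emeasure lborel (uminus -` (B \<inter> {-c<..}))"
      by (rule arg_cong[where f="emeasure lborel"]) auto
    also have "\<dots> = emeasure lborel (B \<inter> {-c<..})"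
      using B by (intro reflect) auto
    also have "\<dots> \<le> emeasure lborel (B \<inter> {-c..})"
      using B by (intro emeasure_mono) auto
    also have "\<dots> \<le> ?S"
      using c by (intro SUP_upper) auto
    finally show "emeasure lborel (?B \<inter> {..<c}) \<le> ?S" .
  qed
  finally show "emeasure lborel B \<le> ?S" .
qed

lemma Brunn_Minkowski_real:
  fixes A B C :: "real set"
  assumes sets: "A \<in> sets borel" "B \<in> sets borel" "C \<in> sets borel" and ne: "A \<noteq> {}" "B \<noteq> {}"
    and sub: "\<And>a b. a \<in> A \<Longrightarrow> b \<in> B \<Longrightarrow> a + b \<in> C"
  shows "emeasure lborel A + emeasure lborel B \<le> emeasure lborel C"
proof -
  have "emeasure lborel A + emeasure lborel B =
     (SUP a\<in>A. emeasure lborel (A \<inter> {..<a})) + (SUP b\<in>B. emeasure lborel (B \<inter> {b..}))"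
    using SUP_emeasure_below_eq[OF sets(1) ne(1)] SUP_emeasure_above_eq[OF sets(2) ne(2)] by simp
  also have "\<dots> = (SUP a\<in>A. SUP b\<in>B. emeasure lborel (A \<inter> {..<a}) + emeasure lborel (B \<inter> {b..}))"
    using ne by (subst ennreal_SUP_add_left[symmetric], simp, subst ennreal_SUP_add_right, simp_all)
  also have "\<dots> \<le> emeasure lborel C"
    using emeasure_below_plus_above_le_sumset[OF sets sub] by (intro SUP_least) auto
  finally show ?thesis .
qed


section \<open>The Pr\'ekopa--Leindler inequality on the line\<close>

lemma superlevel_convex_combination:
  fixes f g h :: "real \<Rightarrow> ennreal"
  assumes t: "0 < t" "t < 1"
    and H: "\<And>x y. enn_powr (f x) (1 - t) * enn_powr (g y) t \<le> h ((1 - t) * x + t * y)"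
    and ab: "0 < a" "0 < b" and r: "0 < r"
    and fx: "ennreal (a * r) < f x" and gy: "ennreal (b * r) < g y"
  shows "ennreal ((a powr (1 - t) * b powr t) * r) < h ((1 - t) * x + t * y)"
proof -
  have "(a * r) powr (1 - t) * (b * r) powr t = (a powr (1 - t) * b powr t) * (r powr (1 - t) * r powr t)"
    using ab r by (simp add: powr_mult)
  also have "r powr (1 - t) * r powr t = r"
    using r by (simp add: powr_add[symmetric])
  finally have "ennreal ((a powr (1 - t) * b powr t) * r)
      = enn_powr (ennreal (a * r)) (1 - t) * enn_powr (ennreal (b * r)) t"
    using ab r by (simp add: enn_powr_ennreal ennreal_mult'[symmetric] del: ennreal_mult')
  also have "\<dots> < enn_powr (f x) (1 - t) * enn_powr (ennreal (b * r)) t"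
    using fx t ab r by (intro ennreal_mult_strict_right_mono enn_powr_strict_mono) (auto simp: enn_powr_ennreal)
  also have "\<dots> \<le> enn_powr (f x) (1 - t) * enn_powr (g y) t"
    using gy t by (intro mult_left_mono less_imp_le[OF enn_powr_strict_mono]) auto
  also have "\<dots> \<le> h ((1 - t) * x + t * y)" by (rule H)
  finally show ?thesis .
qed

text \<open>Brunn--Minkowski for the superlevel sets, scaled by \<open>1 - t\<close> and \<open>t\<close>.\<close>
lemma Prekopa_Leindler_superlevel:
  fixes f g h :: "real \<Rightarrow> ennreal"
  assumes [measurable]: "f \<in> borel_measurable borel" "g \<in> borel_measurable borel" "h \<in> borel_measurable borel"
    and t: "0 < t" "t < 1"
    and H: "\<And>x y. enn_powr (f x) (1 - t) * enn_powr (g y) t \<le> h ((1 - t) * x + t * y)"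
    and ab: "0 < a" "0 < b" and a_le_f: "ennreal a \<le> f x0" and b_le_g: "ennreal b \<le> g y0"
    and r: "0 < r" "r < 1"
  shows "ennreal (1 - t) * emeasure lborel {x. ennreal (a * r) < f x}
      + ennreal t * emeasure lborel {y. ennreal (b * r) < g y}
    \<le> emeasure lborel {z. ennreal ((a powr (1 - t) * b powr t) * r) < h z}"
proof -
  define SA where "SA = {x. ennreal (a * r) < f x}"
  define SB where "SB = {y. ennreal (b * r) < g y}"
  have [measurable]: "SA \<in> sets borel" "SB \<in> sets borel"
    unfolding SA_def SB_def by measurable
  have sets: "{u. u / (1 - t) \<in> SA} \<in> sets borel" "{u. u / t \<in> SB} \<in> sets borel"
    "{z. ennreal ((a powr (1 - t) * b powr t) * r) < h z} \<in> sets borel"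
    by measurable
  have "ennreal (a * r) < ennreal a" "ennreal (b * r) < ennreal b"
    using ab r by (simp_all add: ennreal_less_iff)
  then have "(1 - t) * x0 \<in> {u. u / (1 - t) \<in> SA}" "t * y0 \<in> {u. u / t \<in> SB}"
    using a_le_f b_le_g t by (auto simp: SA_def SB_def)
  moreover have "u + v \<in> {z. ennreal ((a powr (1 - t) * b powr t) * r) < h z}"
    if "u / (1 - t) \<in> SA" "v / t \<in> SB" for u v
    using superlevel_convex_combination[where f=f and g=g and h=h and x="u / (1 - t)" and y="v / t",
        OF t H ab(1,2) r(1)] that t
    by (simp add: SA_def SB_def)
  ultimately have "emeasure lborel {u. u / (1 - t) \<in> SA} + emeasure lborel {u. u / t \<in> SB}
      \<le> emeasure lborel {z. ennreal ((a powr (1 - t) * b powr t) * r) < h z}"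
    by (intro Brunn_Minkowski_real sets) blast+
  moreover have "emeasure lborel {u. u / (1 - t) \<in> SA} = ennreal (1 - t) * emeasure lborel SA"
    "emeasure lborel {u. u / t \<in> SB} = ennreal t * emeasure lborel SB"
    using t by (simp_all add: emeasure_lborel_dilate)
  ultimately show ?thesis by (simp add: SA_def SB_def)
qed

lemma measurable_emeasure_superlevel [measurable]:
  fixes f :: "real \<Rightarrow> ennreal"
  assumes [measurable]: "f \<in> borel_measurable borel"
  shows "(\<lambda>r. emeasure lborel {x. ennreal (a * r) < f x}) \<in> borel_measurable lborel"
proof -
  have "{p :: real \<times> real. ennreal (a * fst p) < f (snd p)}
      = {p \<in> space (lborel \<Otimes>\<^sub>M lborel). ennreal (a * fst p) < f (snd p)}"
    by (auto simp: space_pair_measure)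
  also have "\<dots> \<in> sets (lborel \<Otimes>\<^sub>M lborel)" by measurable
  finally show ?thesis
    using lborel_pair.measurable_emeasure_Pair1 by (simp add: vimage_def)
qed

text \<open>The layer-cake formula for \<open>min f a\<close>, with levels rescaled to \<open>(0, 1)\<close>.\<close>
lemma nn_integral_superlevel_min:
  fixes f :: "real \<Rightarrow> ennreal"
  assumes [measurable]: "f \<in> borel_measurable borel" and a: "0 < a"
  shows "(\<integral>\<^sup>+ r. indicator {0<..<1} r * emeasure lborel {x. ennreal (a * r) < f x} \<partial>lborel)
       = ennreal (1 / a) * (\<integral>\<^sup>+ x. min (f x) (ennreal a) \<partial>lborel)"
proof -
  have "(\<integral>\<^sup>+ r. indicator {0<..<1} r * emeasure lborel {x. ennreal (a * r) < f x} \<partial>lborel)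
     = (\<integral>\<^sup>+ r. \<integral>\<^sup>+ x. indicator {0<..<1} r * indicator {x. ennreal (a * r) < f x} x \<partial>lborel \<partial>lborel)"
    by (intro nn_integral_cong) (subst nn_integral_cmult, auto)
  also have "\<dots> = (\<integral>\<^sup>+ x. \<integral>\<^sup>+ r. indicator {0<..<1} r * indicator {x. ennreal (a * r) < f x} x \<partial>lborel \<partial>lborel)"
    by (rule lborel_pair.Fubini') measurable
  also have "\<dots> = (\<integral>\<^sup>+ x. ennreal (1 / a) * min (f x) (ennreal a) \<partial>lborel)"
  proof (rule nn_integral_cong)
    fix x
    have "(\<integral>\<^sup>+ r. indicator {0<..<1} r * indicator {x. ennreal (a * r) < f x} x \<partial>lborel)
        = (\<integral>\<^sup>+ r. indicator {r. 0 < r \<and> r < 1 \<and> ennreal (a * r) < f x} r \<partial>lborel)"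
      by (intro nn_integral_cong) (auto split: split_indicator)
    also have "\<dots> = emeasure lborel {r. 0 < r \<and> r < 1 \<and> ennreal (a * r) < f x}"
      by (intro nn_integral_indicator) measurable
    also have "\<dots> = ennreal (1 / a) * min (f x) (ennreal a)"
    proof (cases "f x" rule: ennreal_cases)
      case top
      then have "{r. 0 < r \<and> r < 1 \<and> ennreal (a * r) < f x} = {0<..<1}" by auto
      then show ?thesis using top a by (simp add: ennreal_mult'[symmetric] del: ennreal_mult')
    next
      case (real v)
      then have "{r. 0 < r \<and> r < 1 \<and> ennreal (a * r) < f x} = {0<..<min 1 (v / a)}"
        using a by (auto simp: ennreal_less_iff field_simps)
      then show ?thesis using real a
        by (simp add: ennreal_mult'[symmetric] min_def field_simps del: ennreal_mult')
    qed
    finally show "(\<integral>\<^sup>+ r. indicator {0<..<1} r * indicator {x. ennreal (a * r) < f x} x \<partial>lborel)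
        = ennreal (1 / a) * min (f x) (ennreal a)" .
  qed
  also have "\<dots> = ennreal (1 / a) * (\<integral>\<^sup>+ x. min (f x) (ennreal a) \<partial>lborel)"
    by (intro nn_integral_cmult) measurable
  finally show ?thesis .
qed

text \<open>Integrating the superlevel inequality over the level \<open>r\<close> and applying Young's inequality.\<close>
lemma Prekopa_Leindler_truncated:
  fixes f g h :: "real \<Rightarrow> ennreal"
  assumes [measurable]: "f \<in> borel_measurable borel" "g \<in> borel_measurable borel" "h \<in> borel_measurable borel"
    and t: "0 < t" "t < 1"
    and H: "\<And>x y. enn_powr (f x) (1 - t) * enn_powr (g y) t \<le> h ((1 - t) * x + t * y)"
    and ab: "0 < a" "0 < b" and a_le_f: "ennreal a \<le> f x0" and b_le_g: "ennreal b \<le> g y0"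
  shows "enn_powr (\<integral>\<^sup>+ x. min (f x) (ennreal a) \<partial>lborel) (1 - t)
       * enn_powr (\<integral>\<^sup>+ x. min (g x) (ennreal b) \<partial>lborel) t
     \<le> (\<integral>\<^sup>+ z. h z \<partial>lborel)"
proof -
  define c where "c = a powr (1 - t) * b powr t"
  have c: "0 < c" using ab by (simp add: c_def)
  define level where "level u k = (\<integral>\<^sup>+ r. indicator {0<..<1} r * emeasure lborel {x. ennreal (u * r) < k x} \<partial>lborel)"
    for u :: real and k :: "real \<Rightarrow> ennreal"
  have truncated: "(\<integral>\<^sup>+ x. min (k x) (ennreal u) \<partial>lborel) = ennreal u * level u k"
    if [measurable]: "k \<in> borel_measurable borel" and "0 < u" for k u
    using \<open>0 < u\<close> by (simp add: level_def nn_integral_superlevel_min mult.assoc[symmetric] ennreal_mult'[symmetric] del: ennreal_mult')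
  have "ennreal (1 - t) * level a f + ennreal t * level b g =
     (\<integral>\<^sup>+ r. indicator {0<..<1} r * (ennreal (1 - t) * emeasure lborel {x. ennreal (a * r) < f x}
              + ennreal t * emeasure lborel {x. ennreal (b * r) < g x}) \<partial>lborel)"
    unfolding level_def
    by (subst nn_integral_cmult[symmetric], measurable)+
       (subst nn_integral_add[symmetric], measurable, intro nn_integral_cong, simp add: algebra_simps)
  also have "\<dots> \<le> level c h"
    unfolding level_def
  proof (intro nn_integral_mono)
    fix r :: real
    show "indicator {0<..<1} r * (ennreal (1 - t) * emeasure lborel {x. ennreal (a * r) < f x}
              + ennreal t * emeasure lborel {x. ennreal (b * r) < g x})
        \<le> indicator {0<..<1} r * emeasure lborel {x. ennreal (c * r) < h x}"
      using Prekopa_Leindler_superlevel[OF assms(1-5) H ab a_le_f b_le_g, of r]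
      by (cases "r \<in> {0<..<1}") (simp_all add: c_def)
  qed
  finally have levels: "ennreal (1 - t) * level a f + ennreal t * level b g \<le> level c h" .
  have "enn_powr (\<integral>\<^sup>+ x. min (f x) (ennreal a) \<partial>lborel) (1 - t) * enn_powr (\<integral>\<^sup>+ x. min (g x) (ennreal b) \<partial>lborel) t
      = enn_powr (ennreal a * level a f) (1 - t) * enn_powr (ennreal b * level b g) t"
    using ab by (simp add: truncated)
  also have "\<dots> = ennreal c * (enn_powr (level a f) (1 - t) * enn_powr (level b g) t)"
    using ab by (simp add: enn_powr_mult_ennreal c_def ennreal_mult ac_simps)
  also have "\<dots> \<le> ennreal c * (ennreal (1 - t) * level a f + ennreal t * level b g)"
    using t by (intro mult_left_mono enn_powr_Youngs_inequality) auto
  also have "\<dots> \<le> ennreal c * level c h"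
    by (intro mult_left_mono levels) auto
  also have "\<dots> = (\<integral>\<^sup>+ x. min (h x) (ennreal c) \<partial>lborel)"
    using c by (simp add: truncated)
  also have "\<dots> \<le> (\<integral>\<^sup>+ z. h z \<partial>lborel)"
    by (intro nn_integral_mono) auto
  finally show ?thesis .
qed

lemma ennreal_incseq_tendsto_from_below:
  fixes S :: ennreal
  assumes "0 < S"
  obtains a :: "nat \<Rightarrow> real" where "incseq a" "\<And>n. 0 < a n" "\<And>n. ennreal (a n) < S"
    "(\<lambda>n. ennreal (a n)) \<longlonglongrightarrow> S"
proof (cases S rule: ennreal_cases)
  case top
  have "(\<lambda>n. ennreal (real (Suc n))) \<longlonglongrightarrow> top"
    using LIMSEQ_Suc[OF of_nat_tendsto_top_ennreal] by (simp add: ennreal_of_nat_eq_real_of_nat)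
  then show ?thesis using top by (intro that[of "\<lambda>n. real (Suc n)"]) (auto simp: incseq_def)
next
  case (real s)
  then have s: "0 < s" using \<open>0 < S\<close> by auto
  show ?thesis
  proof (rule that[of "\<lambda>n. s - s * inverse (real (Suc n)) / 2"])
    show "incseq (\<lambda>n. s - s * inverse (real (Suc n)) / 2)"
      unfolding incseq_def using s by (auto intro!: mult_left_mono divide_right_mono le_imp_inverse_le)
    have "(\<lambda>n. s - s * inverse (real (Suc n)) / 2) \<longlonglongrightarrow> s - s * 0 / 2"
      by (intro tendsto_intros LIMSEQ_inverse_real_of_nat) auto
    then show "(\<lambda>n. ennreal (s - s * inverse (real (Suc n)) / 2)) \<longlonglongrightarrow> S"
      using real by (auto intro: tendsto_ennrealI)
    fix n
    have "s * inverse (real (Suc n)) \<le> s" using s by (simp add: mult_left_le inverse_le_1_iff)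
    moreover have "0 < s * inverse (real (Suc n))" using s by simp
    ultimately show "0 < s - s * inverse (real (Suc n)) / 2"
      "ennreal (s - s * inverse (real (Suc n)) / 2) < S"
      using s real by (auto intro!: ennreal_lessI)
  qed
qed

lemma nn_integral_truncation_tendsto:
  fixes f :: "real \<Rightarrow> ennreal"
  assumes [measurable]: "f \<in> borel_measurable borel" and nonzero: "(\<integral>\<^sup>+ x. f x \<partial>lborel) \<noteq> 0"
  obtains a :: "nat \<Rightarrow> real" where "\<And>n. 0 < a n" "\<And>n. \<exists>x. ennreal (a n) \<le> f x"
    "(\<lambda>n. \<integral>\<^sup>+ x. min (f x) (ennreal (a n)) \<partial>lborel) \<longlonglongrightarrow> (\<integral>\<^sup>+ x. f x \<partial>lborel)"
proof -
  define S where "S = (SUP x. f x)"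
  have "0 < S"
  proof (rule ccontr)
    assume "\<not> 0 < S"
    then have "\<And>x. f x = 0" by (metis S_def SUP_upper UNIV_I le_zero_eq not_gr_zero)
    then show False using nonzero by simp
  qed
  obtain a :: "nat \<Rightarrow> real" where a: "incseq a" "\<And>n. 0 < a n" "\<And>n. ennreal (a n) < S"
    "(\<lambda>n. ennreal (a n)) \<longlonglongrightarrow> S"
    using ennreal_incseq_tendsto_from_below[OF \<open>0 < S\<close>] by blast
  show ?thesis
  proof (rule that)
    show "0 < a n" for n by (rule a(2))
    show "\<exists>x. ennreal (a n) \<le> f x" for n
      using a(3)[of n] by (auto simp: S_def less_SUP_iff intro: less_imp_le)
    show "(\<lambda>n. \<integral>\<^sup>+ x. min (f x) (ennreal (a n)) \<partial>lborel) \<longlonglongrightarrow> (\<integral>\<^sup>+ x. f x \<partial>lborel)"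
    proof (rule nn_integral_LIMSEQ)
      show "incseq (\<lambda>n x. min (f x) (ennreal (a n)))"
        using a(1) unfolding incseq_def le_fun_def by (metis ennreal_leI min.mono order_refl)
      fix x
      have "(\<lambda>n. min (f x) (ennreal (a n))) \<longlonglongrightarrow> min (f x) S"
        by (intro tendsto_min tendsto_const a(4))
      then show "(\<lambda>n. min (f x) (ennreal (a n))) \<longlonglongrightarrow> f x"
        by (simp add: S_def SUP_upper min_absorb1)
    qed measurable
  qed
qed

lemma Prekopa_Leindler_real:
  fixes f g h :: "real \<Rightarrow> ennreal"
  assumes [measurable]: "f \<in> borel_measurable borel" "g \<in> borel_measurable borel" "h \<in> borel_measurable borel"
    and t: "0 < t" "t < 1"
    and H: "\<And>x y. enn_powr (f x) (1 - t) * enn_powr (g y) t \<le> h ((1 - t) * x + t * y)"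
  shows "enn_powr (\<integral>\<^sup>+ x. f x \<partial>lborel) (1 - t) * enn_powr (\<integral>\<^sup>+ x. g x \<partial>lborel) t \<le> (\<integral>\<^sup>+ z. h z \<partial>lborel)"
proof (cases "(\<integral>\<^sup>+ x. f x \<partial>lborel) = 0 \<or> (\<integral>\<^sup>+ x. g x \<partial>lborel) = 0")
  case True
  then show ?thesis by auto
next
  case False
  then have F0: "(\<integral>\<^sup>+ x. f x \<partial>lborel) \<noteq> 0" and G0: "(\<integral>\<^sup>+ x. g x \<partial>lborel) \<noteq> 0" by auto
  obtain a where a: "\<And>n. 0 < a n" "\<And>n. \<exists>x. ennreal (a n) \<le> f x"
    and lim_f: "(\<lambda>n. \<integral>\<^sup>+ x. min (f x) (ennreal (a n)) \<partial>lborel) \<longlonglongrightarrow> (\<integral>\<^sup>+ x. f x \<partial>lborel)"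
    using nn_integral_truncation_tendsto[OF _ F0] by auto
  obtain b where b: "\<And>n. 0 < b n" "\<And>n. \<exists>x. ennreal (b n) \<le> g x"
    and lim_g: "(\<lambda>n. \<integral>\<^sup>+ x. min (g x) (ennreal (b n)) \<partial>lborel) \<longlonglongrightarrow> (\<integral>\<^sup>+ x. g x \<partial>lborel)"
    using nn_integral_truncation_tendsto[OF _ G0] by auto
  have "(\<lambda>n. enn_powr (\<integral>\<^sup>+ x. min (f x) (ennreal (a n)) \<partial>lborel) (1 - t)
            * enn_powr (\<integral>\<^sup>+ x. min (g x) (ennreal (b n)) \<partial>lborel) t)
     \<longlonglongrightarrow> enn_powr (\<integral>\<^sup>+ x. f x \<partial>lborel) (1 - t) * enn_powr (\<integral>\<^sup>+ x. g x \<partial>lborel) t"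
    using t enn_powr_pos[OF F0, of "1 - t"] enn_powr_pos[OF G0, of t]
    by (intro tendsto_mult_ennreal enn_powr_tendsto lim_f lim_g) auto
  moreover have "enn_powr (\<integral>\<^sup>+ x. min (f x) (ennreal (a n)) \<partial>lborel) (1 - t)
      * enn_powr (\<integral>\<^sup>+ x. min (g x) (ennreal (b n)) \<partial>lborel) t \<le> (\<integral>\<^sup>+ z. h z \<partial>lborel)" for n
    using a(2)[of n] b(2)[of n] by (auto intro: Prekopa_Leindler_truncated[OF assms(1-5) H a(1) b(1)])
  ultimately show ?thesis
    by (intro LIMSEQ_le_const2) auto
qed


section \<open>Marginals of log-concave functions\<close>

definition enn_log_concave :: "(('b \<Rightarrow> real) \<Rightarrow> ennreal) \<Rightarrow> bool" where
  "enn_log_concave F \<longleftrightarrow>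
     (\<forall>x y. \<forall>t\<in>{0<..<1}. enn_powr (F x) (1 - t) * enn_powr (F y) t \<le> F (\<lambda>i. (1 - t) * x i + t * y i))"

lemma enn_log_concaveD:
  assumes "enn_log_concave F" "0 < t" "t < 1"
  shows "enn_powr (F x) (1 - t) * enn_powr (F y) t \<le> F (\<lambda>i. (1 - t) * x i + t * y i)"
  using assms unfolding enn_log_concave_def by auto

text \<open>Integrating out the coordinates in \<open>J\<close>; the remaining coordinates are taken from \<open>x\<close>.\<close>
definition marginal :: "'b set \<Rightarrow> (('b \<Rightarrow> real) \<Rightarrow> ennreal) \<Rightarrow> ('b \<Rightarrow> real) \<Rightarrow> ennreal" where
  "marginal J F x = (\<integral>\<^sup>+ y. F (override_on x y J) \<partial>PiM J (\<lambda>_. lborel))"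

abbreviation lborel_fun :: "('b \<Rightarrow> real) measure" where
  "lborel_fun \<equiv> PiM UNIV (\<lambda>_. lborel)"

lemma measurable_fun_upd_pair:
  "(\<lambda>(x :: 'b \<Rightarrow> real, r :: real). x(j := r)) \<in> measurable (lborel_fun \<Otimes>\<^sub>M lborel) lborel_fun"
proof -
  have "(\<lambda>p i. (case p of (x, r) \<Rightarrow> x(j := r)) i) \<in> measurable (lborel_fun \<Otimes>\<^sub>M lborel) lborel_fun"
  proof (rule measurable_PiM_single')
    fix i :: 'b
    show "(\<lambda>p. (case p of (x, r) \<Rightarrow> x(j := r)) i) \<in> measurable (lborel_fun \<Otimes>\<^sub>M lborel) lborel"
    proof (cases "i = j")
      case False
      then have "(\<lambda>p. (case p of (x, r) \<Rightarrow> x(j := r)) i) = (\<lambda>p. fst p i)"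
        by (auto simp: case_prod_beta)
      then show ?thesis by simp
    qed (simp add: case_prod_beta)
  qed (auto simp: space_PiM)
  then show ?thesis by simp
qed

lemma measurable_fun_upd: "(\<lambda>r. x(j := r)) \<in> measurable borel (lborel_fun :: ('b \<Rightarrow> real) measure)"
proof -
  have "(\<lambda>r i. (x(j := r)) i) \<in> measurable borel (lborel_fun :: ('b \<Rightarrow> real) measure)"
  proof (rule measurable_PiM_single')
    fix i :: 'b
    show "(\<lambda>r. (x(j := r)) i) \<in> measurable borel lborel"
      by (cases "i = j") auto
  qed (auto simp: space_PiM)
  moreover have "(\<lambda>r. x(j := r)) = (\<lambda>r i. (x(j := r)) i)" by (auto simp: fun_eq_iff)
  ultimately show ?thesis by simp
qed

lemma measurable_override_on:
  "(\<lambda>y. override_on x y J) \<in> measurable (PiM J (\<lambda>_. lborel)) (lborel_fun :: ('b \<Rightarrow> real) measure)"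
proof -
  have "(\<lambda>y i. override_on x y J i) \<in> measurable (PiM J (\<lambda>_. lborel)) (lborel_fun :: ('b \<Rightarrow> real) measure)"
  proof (rule measurable_PiM_single')
    fix i :: 'b
    show "(\<lambda>y. override_on x y J i) \<in> measurable (PiM J (\<lambda>_. lborel)) lborel"
      by (cases "i \<in> J") (auto simp: override_on_def)
  qed (auto simp: space_PiM)
  then show ?thesis by simp
qed

lemma measurable_nn_integral_fun_upd:
  assumes "F \<in> borel_measurable (lborel_fun :: ('b \<Rightarrow> real) measure)"
  shows "(\<lambda>x. \<integral>\<^sup>+ r. F (x(j := r)) \<partial>lborel) \<in> borel_measurable lborel_fun"
proof -
  have "(\<lambda>(x, r). F (x(j := r))) \<in> borel_measurable (lborel_fun \<Otimes>\<^sub>M lborel)"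
    using measurable_comp[OF measurable_fun_upd_pair[of j] assms] by (simp add: comp_def case_prod_beta)
  then show ?thesis
    by (intro lborel.borel_measurable_nn_integral) (simp add: case_prod_beta)
qed

text \<open>The one-dimensional Pr\'ekopa--Leindler inequality, applied on each line parallel to a coordinate axis.\<close>
lemma enn_log_concave_nn_integral_fun_upd:
  assumes F: "F \<in> borel_measurable (lborel_fun :: ('b \<Rightarrow> real) measure)" and "enn_log_concave F"
  shows "enn_log_concave (\<lambda>x. \<integral>\<^sup>+ r. F (x(j := r)) \<partial>lborel)"
  unfolding enn_log_concave_def
proof (intro allI ballI)
  fix x y :: "'b \<Rightarrow> real" and t :: real assume t: "t \<in> {0<..<1}"
  define z where "z = (\<lambda>i. (1 - t) * x i + t * y i)"
  have measurable: "(\<lambda>r. F (w(j := r))) \<in> borel_measurable borel" for w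
    using measurable_comp[OF measurable_fun_upd[of w j] F] by (simp add: comp_def)
  have "enn_powr (F (x(j := r))) (1 - t) * enn_powr (F (y(j := s))) t \<le> F (z(j := (1 - t) * r + t * s))"
    for r s :: real
  proof -
    have "(\<lambda>i. (1 - t) * (x(j := r)) i + t * (y(j := s)) i) = z(j := (1 - t) * r + t * s)"
      by (auto simp: z_def)
    then show ?thesis using \<open>enn_log_concave F\<close> t unfolding enn_log_concave_def by metis
  qed
  then show "enn_powr (\<integral>\<^sup>+ r. F (x(j := r)) \<partial>lborel) (1 - t) * enn_powr (\<integral>\<^sup>+ r. F (y(j := r)) \<partial>lborel) t
      \<le> (\<integral>\<^sup>+ r. F ((\<lambda>i. (1 - t) * x i + t * y i)(j := r)) \<partial>lborel)"
    unfolding z_def[symmetric] using t by (intro Prekopa_Leindler_real measurable) auto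
qed

lemma marginal_empty: "marginal {} F x = F x"
  by (simp add: marginal_def PiM_empty nn_integral_count_space_finite)

lemma marginal_insert:
  assumes J: "finite J" "j \<notin> J" and F: "F \<in> borel_measurable (lborel_fun :: ('b \<Rightarrow> real) measure)"
  shows "marginal (insert j J) F x = marginal J (\<lambda>x. \<integral>\<^sup>+ r. F (x(j := r)) \<partial>lborel) x"
proof -
  interpret product_sigma_finite "\<lambda>_ :: 'b. lborel :: real measure" by standard
  have "(\<lambda>y. F (override_on x y (insert j J))) \<in> borel_measurable (PiM (insert j J) (\<lambda>_. lborel))"
    using measurable_comp[OF measurable_override_on F] by (simp add: comp_def)
  then have "marginal (insert j J) F x
      = (\<integral>\<^sup>+ y. \<integral>\<^sup>+ r. F (override_on x (y(j := r)) (insert j J)) \<partial>lborel \<partial>PiM J (\<lambda>_. lborel))"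
    unfolding marginal_def by (rule product_nn_integral_insert[OF J])
  also have "\<dots> = marginal J (\<lambda>x. \<integral>\<^sup>+ r. F (x(j := r)) \<partial>lborel) x"
    unfolding marginal_def
    by (intro nn_integral_cong arg_cong[where f=F]) (auto simp: override_on_def)
  finally show ?thesis .
qed

lemma enn_log_concave_marginal:
  assumes "finite J" "F \<in> borel_measurable (lborel_fun :: ('b \<Rightarrow> real) measure)" "enn_log_concave F"
  shows "enn_log_concave (marginal J F)"
  using assms
proof (induction J arbitrary: F rule: finite_induct)
  case empty
  then show ?case by (simp add: marginal_empty[abs_def])
next
  case (insert j J)
  then have "marginal (insert j J) F = marginal J (\<lambda>x. \<integral>\<^sup>+ r. F (x(j := r)) \<partial>lborel)"
    by (auto simp: marginal_insert)
  with insert show ?case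
    by (simp add: measurable_nn_integral_fun_upd enn_log_concave_nn_integral_fun_upd)
qed


section \<open>Pushing a log-concave density forward to a line\<close>

text \<open>The point whose coordinates off \<open>e\<close> are \<open>z b\<close> and whose inner product with \<open>\<xi>\<close> is \<open>z e\<close>
  (provided \<open>\<xi> \<bullet> e \<noteq> 0\<close>).\<close>
definition level_coords :: "'a::euclidean_space \<Rightarrow> 'a \<Rightarrow> ('a \<Rightarrow> real) \<Rightarrow> 'a" where
  "level_coords \<xi> e z = (\<Sum>b\<in>Basis - {e}. z b *\<^sub>R b)
     + ((z e - (\<Sum>b\<in>Basis - {e}. z b *\<^sub>R b) \<bullet> \<xi>) / (\<xi> \<bullet> e)) *\<^sub>R e"

lemma level_coords_convex_combination:
  "level_coords \<xi> e (\<lambda>i. (1 - t) * x i + t * y i) = (1 - t) *\<^sub>R level_coords \<xi> e x + t *\<^sub>R level_coords \<xi> e y"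
  by (simp add: level_coords_def scaleR_add_left scaleR_add_right sum.distrib scaleR_sum_right
      inner_add_left inner_sum_left algebra_simps add_divide_distrib diff_divide_distrib sum_subtractf
      sum_distrib_left)

lemma measurable_level_coords [measurable]:
  "level_coords \<xi> e \<in> borel_measurable (lborel_fun :: ('a::euclidean_space \<Rightarrow> real) measure)"
  unfolding level_coords_def[abs_def] by measurable

lemma level_coords_override_on:
  "level_coords \<xi> e (override_on (\<lambda>_. s) y (Basis - {e}))
    = (\<Sum>b\<in>Basis - {e}. y b *\<^sub>R b) + ((s - (\<Sum>b\<in>Basis - {e}. y b *\<^sub>R b) \<bullet> \<xi>) / (\<xi> \<bullet> e)) *\<^sub>R e"
  unfolding level_coords_def override_on_def by (auto intro!: sum.cong)

lemma nn_integral_line_inner_substitution: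
  fixes f :: "'a::euclidean_space \<Rightarrow> real" and \<phi> :: "real \<Rightarrow> ennreal"
  assumes [measurable]: "f \<in> borel_measurable borel" "\<phi> \<in> borel_measurable borel" and k: "\<xi> \<bullet> e \<noteq> 0"
  shows "(\<integral>\<^sup>+r. ennreal (f (p + r *\<^sub>R e)) * \<phi> ((p + r *\<^sub>R e) \<bullet> \<xi>) \<partial>lborel)
    = (\<integral>\<^sup>+s. ennreal (1 / \<bar>\<xi> \<bullet> e\<bar>) * (ennreal (f (p + ((s - p \<bullet> \<xi>) / (\<xi> \<bullet> e)) *\<^sub>R e)) * \<phi> s) \<partial>lborel)"
proof -
  define \<kappa> where "\<kappa> = \<xi> \<bullet> e"
  have k0: "\<kappa> \<noteq> 0" using k by (simp add: \<kappa>_def)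
  define \<psi> where "\<psi> r = ennreal (f (p + r *\<^sub>R e)) * \<phi> (p \<bullet> \<xi> + r * \<kappa>)" for r
  have [measurable]: "\<psi> \<in> borel_measurable borel" unfolding \<psi>_def[abs_def] by measurable
  have "(p + r *\<^sub>R e) \<bullet> \<xi> = p \<bullet> \<xi> + r * \<kappa>" for r
    using inner_commute[of e \<xi>] by (simp add: \<kappa>_def inner_add_left)
  then have "(\<integral>\<^sup>+r. ennreal (f (p + r *\<^sub>R e)) * \<phi> ((p + r *\<^sub>R e) \<bullet> \<xi>) \<partial>lborel) = (\<integral>\<^sup>+r. \<psi> r \<partial>lborel)"
    by (simp add: \<psi>_def)
  also have "\<dots> = ennreal \<bar>1 / \<kappa>\<bar> * (\<integral>\<^sup>+s. \<psi> (- (p \<bullet> \<xi>) / \<kappa> + (1 / \<kappa>) * s) \<partial>lborel)"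
    using k0 by (intro nn_integral_real_affine) auto
  also have "(\<integral>\<^sup>+s. \<psi> (- (p \<bullet> \<xi>) / \<kappa> + (1 / \<kappa>) * s) \<partial>lborel)
      = (\<integral>\<^sup>+s. ennreal (f (p + ((s - p \<bullet> \<xi>) / \<kappa>) *\<^sub>R e)) * \<phi> s \<partial>lborel)"
  proof (intro nn_integral_cong)
    fix s
    have "- (p \<bullet> \<xi>) / \<kappa> + (1 / \<kappa>) * s = (s - p \<bullet> \<xi>) / \<kappa>" using k0 by (simp add: field_simps)
    moreover have "p \<bullet> \<xi> + (s - p \<bullet> \<xi>) / \<kappa> * \<kappa> = s" using k0 by simp
    ultimately show "\<psi> (- (p \<bullet> \<xi>) / \<kappa> + (1 / \<kappa>) * s) = ennreal (f (p + ((s - p \<bullet> \<xi>) / \<kappa>) *\<^sub>R e)) * \<phi> s"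
      by (simp add: \<psi>_def)
  qed
  finally show ?thesis
    by (subst nn_integral_cmult) (auto simp: \<kappa>_def abs_divide)
qed

text \<open>The density at \<open>s\<close> of the image of \<open>f\<close> under \<open>x \<mapsto> x \<bullet> \<xi>\<close>: the integral of \<open>f\<close> over the
  hyperplane \<open>x \<bullet> \<xi> = s\<close>, parametrised by the coordinates off \<open>e\<close>.\<close>
definition inner_marginal :: "('a::euclidean_space \<Rightarrow> real) \<Rightarrow> 'a \<Rightarrow> 'a \<Rightarrow> real \<Rightarrow> ennreal" where
  "inner_marginal f \<xi> e s =
     ennreal (1 / \<bar>\<xi> \<bullet> e\<bar>) * marginal (Basis - {e}) (\<lambda>z. ennreal (f (level_coords \<xi> e z))) (\<lambda>_. s)"

lemma measurable_inner_marginal [measurable]: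
  fixes f :: "'a::euclidean_space \<Rightarrow> real"
  assumes [measurable]: "f \<in> borel_measurable borel"
  shows "inner_marginal f \<xi> e \<in> borel_measurable borel"
proof -
  interpret finite_product_sigma_finite "\<lambda>_ :: 'a. lborel :: real measure" "Basis - {e}"
    by standard auto
  have "(\<lambda>s. \<integral>\<^sup>+y. ennreal (f (level_coords \<xi> e (override_on (\<lambda>_. s) y (Basis - {e})))) \<partial>PiM (Basis - {e}) (\<lambda>_. lborel))
      \<in> borel_measurable borel"
    unfolding level_coords_override_on by (rule borel_measurable_nn_integral) measurable
  then show ?thesis
    unfolding inner_marginal_def[abs_def] marginal_def by measurable
qed

text \<open>Fubini in the coordinates \<open>y\<close> off \<open>e\<close> and the level \<open>s = x \<bullet> \<xi>\<close> in place of \<open>x \<bullet> e\<close>.\<close>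
lemma nn_integral_inner_disintegration:
  fixes f :: "'a::euclidean_space \<Rightarrow> real" and \<phi> :: "real \<Rightarrow> ennreal"
  assumes [measurable]: "f \<in> borel_measurable borel" "\<phi> \<in> borel_measurable borel"
    and e: "e \<in> Basis" and k: "\<xi> \<bullet> e \<noteq> 0"
  shows "(\<integral>\<^sup>+x. ennreal (f x) * \<phi> (x \<bullet> \<xi>) \<partial>lborel) = (\<integral>\<^sup>+s. inner_marginal f \<xi> e s * \<phi> s \<partial>lborel)"
proof -
  define B' where "B' = Basis - {e}"
  interpret product_sigma_finite "\<lambda>_ :: 'a. lborel :: real measure" by standard
  interpret BP: finite_product_sigma_finite "\<lambda>_ :: 'a. lborel :: real measure" B' by standard (auto simp: B'_def)
  interpret PS: pair_sigma_finite "PiM B' (\<lambda>_ :: 'a. lborel :: real measure)" "lborel :: real measure"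
    by (intro pair_sigma_finite.intro BP.sigma_finite_measure_axioms lborel.sigma_finite_measure_axioms)
  have B': "finite B'" "e \<notin> B'" "Basis = insert e B'" using e by (auto simp: B'_def)
  define K where "K y = ennreal (f (\<Sum>b\<in>Basis. y b *\<^sub>R b)) * \<phi> ((\<Sum>b\<in>Basis. y b *\<^sub>R b) \<bullet> \<xi>)"
    for y :: "'a \<Rightarrow> real"
  define H where "H y s = ennreal (f (level_coords \<xi> e (override_on (\<lambda>_. s) y B'))) * \<phi> s"
    for y :: "'a \<Rightarrow> real" and s :: real
  have H_eq: "H y s = ennreal (f ((\<Sum>b\<in>B'. y b *\<^sub>R b) + ((s - (\<Sum>b\<in>B'. y b *\<^sub>R b) \<bullet> \<xi>) / (\<xi> \<bullet> e)) *\<^sub>R e)) * \<phi> s"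
    for y s unfolding H_def B'_def level_coords_override_on ..
  have [measurable]: "K \<in> borel_measurable (PiM Basis (\<lambda>_. lborel))"
    unfolding K_def[abs_def] by measurable
  have [measurable]: "(\<lambda>(y, s). H y s) \<in> borel_measurable (PiM B' (\<lambda>_. lborel) \<Otimes>\<^sub>M lborel)"
    unfolding H_eq[abs_def] B'_def by measurable
  have "(\<integral>\<^sup>+x. ennreal (f x) * \<phi> (x \<bullet> \<xi>) \<partial>lborel) = (\<integral>\<^sup>+y. K y \<partial>PiM Basis (\<lambda>_. lborel))"
    unfolding K_def by (subst lborel_eq) (simp add: nn_integral_distr)
  also have "\<dots> = (\<integral>\<^sup>+y. \<integral>\<^sup>+r. K (y(e := r)) \<partial>lborel \<partial>PiM B' (\<lambda>_. lborel))"
    unfolding B'(3) by (intro product_nn_integral_insert B'(1,2)) (simp add: B'(3)[symmetric])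
  also have "\<dots> = (\<integral>\<^sup>+y. \<integral>\<^sup>+s. ennreal (1 / \<bar>\<xi> \<bullet> e\<bar>) * H y s \<partial>lborel \<partial>PiM B' (\<lambda>_. lborel))"
  proof (rule nn_integral_cong)
    fix y :: "'a \<Rightarrow> real"
    have "(\<Sum>b\<in>B'. (y(e := r)) b *\<^sub>R b) = (\<Sum>b\<in>B'. y b *\<^sub>R b)" for r
      using B'(2) by (intro sum.cong) auto
    then have "(\<Sum>b\<in>Basis. (y(e := r)) b *\<^sub>R b) = (\<Sum>b\<in>B'. y b *\<^sub>R b) + r *\<^sub>R e" for r
      unfolding B'(3) using B'(1,2) by (simp add: add.commute)
    then show "(\<integral>\<^sup>+r. K (y(e := r)) \<partial>lborel) = (\<integral>\<^sup>+s. ennreal (1 / \<bar>\<xi> \<bullet> e\<bar>) * H y s \<partial>lborel)"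
      using nn_integral_line_inner_substitution[OF assms(1,2) k, of "\<Sum>b\<in>B'. y b *\<^sub>R b"]
      by (simp add: K_def H_eq)
  qed
  also have "\<dots> = (\<integral>\<^sup>+s. \<integral>\<^sup>+y. ennreal (1 / \<bar>\<xi> \<bullet> e\<bar>) * H y s \<partial>PiM B' (\<lambda>_. lborel) \<partial>lborel)"
    by (rule PS.Fubini'[symmetric]) measurable
  also have "\<dots> = (\<integral>\<^sup>+s. ennreal (1 / \<bar>\<xi> \<bullet> e\<bar>) * marginal B' (\<lambda>z. ennreal (f (level_coords \<xi> e z))) (\<lambda>_. s) * \<phi> s \<partial>lborel)"
  proof (intro nn_integral_cong)
    fix s
    have [measurable]: "(\<lambda>y. ennreal (f (level_coords \<xi> e (override_on (\<lambda>_. s) y B')))) \<in> borel_measurable (PiM B' (\<lambda>_. lborel))"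
      unfolding B'_def level_coords_override_on by measurable
    show "(\<integral>\<^sup>+y. ennreal (1 / \<bar>\<xi> \<bullet> e\<bar>) * H y s \<partial>PiM B' (\<lambda>_. lborel))
        = ennreal (1 / \<bar>\<xi> \<bullet> e\<bar>) * marginal B' (\<lambda>z. ennreal (f (level_coords \<xi> e z))) (\<lambda>_. s) * \<phi> s"
      unfolding H_def marginal_def
      by (subst nn_integral_cmult, measurable, subst nn_integral_multc, measurable) (simp add: mult.assoc)
  qed
  finally show ?thesis by (simp add: B'_def inner_marginal_def)
qed

lemma distr_density_inner_eq_inner_marginal:
  fixes f :: "'a::euclidean_space \<Rightarrow> real"
  assumes [measurable]: "f \<in> borel_measurable borel" and "e \<in> Basis" "\<xi> \<bullet> e \<noteq> 0"
  shows "distr (density lborel (\<lambda>x. ennreal (f x))) borel (\<lambda>x. x \<bullet> \<xi>) = density lborel (inner_marginal f \<xi> e)"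
proof (rule measure_eqI)
  fix S :: "real set" assume "S \<in> sets (distr (density lborel (\<lambda>x. ennreal (f x))) borel (\<lambda>x. x \<bullet> \<xi>))"
  then have [measurable]: "S \<in> sets borel" by simp
  have "emeasure (distr (density lborel (\<lambda>x. ennreal (f x))) borel (\<lambda>x. x \<bullet> \<xi>)) S
      = emeasure (density lborel (\<lambda>x. ennreal (f x))) ((\<lambda>x. x \<bullet> \<xi>) -` S \<inter> space (density lborel (\<lambda>x. ennreal (f x))))"
    by (rule emeasure_distr) measurable
  also have "\<dots> = (\<integral>\<^sup>+x. ennreal (f x) * indicator S (x \<bullet> \<xi>) \<partial>lborel)"
    by (subst emeasure_density) (measurable, auto intro!: nn_integral_cong split: split_indicator)
  also have "\<dots> = (\<integral>\<^sup>+s. inner_marginal f \<xi> e s * indicator S s \<partial>lborel)"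
    using assms by (intro nn_integral_inner_disintegration) measurable
  also have "\<dots> = emeasure (density lborel (inner_marginal f \<xi> e)) S"
    by (simp add: emeasure_density)
  finally show "emeasure (distr (density lborel (\<lambda>x. ennreal (f x))) borel (\<lambda>x. x \<bullet> \<xi>)) S
      = emeasure (density lborel (inner_marginal f \<xi> e)) S" .
qed simp

lemma inner_marginal_log_concave:
  fixes f :: "'a::euclidean_space \<Rightarrow> real"
  assumes lc: "log_concave_density f" and "\<xi> \<bullet> e \<noteq> 0" and t: "0 < t" "t < 1"
  shows "enn_powr (inner_marginal f \<xi> e x) (1 - t) * enn_powr (inner_marginal f \<xi> e y) t
    \<le> inner_marginal f \<xi> e ((1 - t) * x + t * y)"
proof -
  have [measurable]: "f \<in> borel_measurable borel" and f_nonneg: "\<And>x. 0 \<le> f x"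
    and f_lc: "\<And>x y t. t \<in> {0<..<1} \<Longrightarrow> f x powr (1 - t) * f y powr t \<le> f ((1 - t) *\<^sub>R x + t *\<^sub>R y)"
    using lc by (simp_all add: log_concave_density_def)
  define F where "F z = ennreal (f (level_coords \<xi> e z))" for z
  define c where "c = 1 / \<bar>\<xi> \<bullet> e\<bar>"
  have c: "0 < c" using \<open>\<xi> \<bullet> e \<noteq> 0\<close> by (simp add: c_def)
  have "enn_log_concave F"
    unfolding enn_log_concave_def
  proof (intro allI ballI)
    fix x y :: "'a \<Rightarrow> real" and t :: real assume t: "t \<in> {0<..<1}"
    have "enn_powr (F x) (1 - t) * enn_powr (F y) t
        = ennreal (f (level_coords \<xi> e x) powr (1 - t) * f (level_coords \<xi> e y) powr t)"
      using f_nonneg by (simp add: F_def enn_powr_ennreal ennreal_mult)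
    also have "\<dots> \<le> F (\<lambda>i. (1 - t) * x i + t * y i)"
      using f_lc[OF t] by (simp add: F_def level_coords_convex_combination ennreal_leI)
    finally show "enn_powr (F x) (1 - t) * enn_powr (F y) t \<le> F (\<lambda>i. (1 - t) * x i + t * y i)" .
  qed
  moreover have "F \<in> borel_measurable lborel_fun"
    unfolding F_def[abs_def] by measurable
  ultimately have marginal_lc: "enn_log_concave (marginal (Basis - {e}) F)"
    by (intro enn_log_concave_marginal) auto
  have "enn_powr (inner_marginal f \<xi> e x) (1 - t) * enn_powr (inner_marginal f \<xi> e y) t
      = ennreal (c powr (1 - t) * c powr t)
        * (enn_powr (marginal (Basis - {e}) F (\<lambda>_. x)) (1 - t) * enn_powr (marginal (Basis - {e}) F (\<lambda>_. y)) t)"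
    using c by (simp add: inner_marginal_def F_def[abs_def] c_def enn_powr_mult_ennreal ennreal_mult ac_simps)
  also have "c powr (1 - t) * c powr t = c" using c by (simp add: powr_add[symmetric])
  also have "enn_powr (marginal (Basis - {e}) F (\<lambda>_. x)) (1 - t) * enn_powr (marginal (Basis - {e}) F (\<lambda>_. y)) t
      \<le> marginal (Basis - {e}) F (\<lambda>i. (1 - t) * (\<lambda>_. x) i + t * (\<lambda>_. y) i)"
    using enn_log_concaveD[OF marginal_lc t] .
  finally show ?thesis by (simp add: inner_marginal_def F_def[abs_def] c_def mult_left_mono)
qed

text \<open>If \<open>G s\<^sub>0 = \<infinity>\<close> and \<open>G s\<^sub>1 > 0\<close>, log-concavity makes \<open>G\<close> infinite on the whole segment between them.\<close>
lemma enn_log_concave_real_finite: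
  fixes G :: "real \<Rightarrow> ennreal"
  assumes [measurable]: "G \<in> borel_measurable borel"
    and LC: "\<And>x y t. 0 < t \<Longrightarrow> t < 1 \<Longrightarrow> enn_powr (G x) (1 - t) * enn_powr (G y) t \<le> G ((1 - t) * x + t * y)"
    and nonzero: "(\<integral>\<^sup>+s. G s \<partial>lborel) \<noteq> 0" and finite: "(\<integral>\<^sup>+s. G s \<partial>lborel) \<noteq> \<infinity>"
  shows "G s0 < \<infinity>"
proof (rule ccontr)
  assume "\<not> G s0 < \<infinity>"
  then have top: "G s0 = \<infinity>" by (simp add: less_top[symmetric])
  have "\<exists>s1. s1 \<noteq> s0 \<and> G s1 \<noteq> 0"
  proof (rule ccontr)
    assume "\<not> ?thesis"
    then have "AE s in lborel. G s = 0"
      by (auto intro: eventually_mono[OF AE_lborel_singleton[of s0]])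
    then show False using nonzero by (simp add: nn_integral_0_iff_AE)
  qed
  then obtain s1 where s1: "s1 \<noteq> s0" "G s1 \<noteq> 0" by auto
  define I where "I = {min s0 s1<..<max s0 s1}"
  have "G z = \<infinity>" if z: "z \<in> I" for z
  proof -
    define t where "t = (z - s0) / (s1 - s0)"
    have t: "0 < t" "t < 1"
      using z s1 unfolding I_def t_def
      by (cases "s0 < s1"; auto simp: divide_pos_neg divide_less_eq divide_neg_neg less_divide_eq min_def max_def)+
    have "t * (s1 - s0) = z - s0" using s1 by (simp add: t_def)
    then have "(1 - t) * s0 + t * s1 = z" by (simp add: algebra_simps)
    moreover have "enn_powr (G s0) (1 - t) * enn_powr (G s1) t = \<infinity>"
      using top enn_powr_pos[OF s1(2), of t] by (simp add: ennreal_top_mult)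
    ultimately show ?thesis using LC[OF t, of s0 s1] by (simp add: top_unique)
  qed
  then have "(\<integral>\<^sup>+s. \<infinity> * indicator I s \<partial>lborel) \<le> (\<integral>\<^sup>+s. G s \<partial>lborel)"
    by (intro nn_integral_mono) (auto split: split_indicator)
  moreover have "(\<integral>\<^sup>+s. \<infinity> * indicator I s \<partial>lborel) = \<infinity> * emeasure lborel I"
    by (rule nn_integral_cmult_indicator) (simp add: I_def)
  moreover have "emeasure lborel I \<noteq> 0"
    using s1 by (simp add: I_def min_def max_def)
  ultimately have "(\<integral>\<^sup>+s. G s \<partial>lborel) = \<infinity>"
    by (simp add: ennreal_top_mult top_unique)
  with finite show False by simp
qed

lemma log_concave_density_enn2real:
  fixes G :: "real \<Rightarrow> ennreal"
  assumes "G \<in> borel_measurable borel" "\<And>s. G s < \<infinity>"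
    and LC: "\<And>x y t. 0 < t \<Longrightarrow> t < 1 \<Longrightarrow> enn_powr (G x) (1 - t) * enn_powr (G y) t \<le> G ((1 - t) * x + t * y)"
  shows "log_concave_density (\<lambda>s. enn2real (G s))"
  unfolding log_concave_density_def
proof (intro conjI allI ballI)
  show "(\<lambda>s. enn2real (G s)) \<in> borel_measurable lborel" using assms(1) by simp
next
  fix x y t :: real assume t: "t \<in> {0<..<1}"
  have G: "G s = ennreal (enn2real (G s))" for s using assms(2)[of s] by simp
  have "ennreal (enn2real (G x) powr (1 - t) * enn2real (G y) powr t) = enn_powr (G x) (1 - t) * enn_powr (G y) t"
    by (subst (3 4) G) (simp add: enn_powr_ennreal ennreal_mult)
  also have "\<dots> \<le> G ((1 - t) * x + t * y)" using LC t by auto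
  finally show "enn2real (G x) powr (1 - t) * enn2real (G y) powr t \<le> enn2real (G ((1 - t) *\<^sub>R x + t *\<^sub>R y))"
    by (subst (asm) G) simp
qed simp

lemma log_concave_density_pushforward_inner:
  fixes f :: "'a::euclidean_space \<Rightarrow> real"
  assumes lc: "log_concave_density f"
    and nonzero: "(\<integral>\<^sup>+x. ennreal (f x) \<partial>lborel) \<noteq> 0" and finite: "(\<integral>\<^sup>+x. ennreal (f x) \<partial>lborel) \<noteq> \<infinity>"
    and "\<xi> \<noteq> 0"
  obtains g :: "real \<Rightarrow> real" where "log_concave_density g"
    "distr (density lborel (\<lambda>x. ennreal (f x))) borel (\<lambda>x. x \<bullet> \<xi>) = density lborel (\<lambda>s. ennreal (g s))"
proof -
  have [measurable]: "f \<in> borel_measurable borel"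
    using lc by (simp add: log_concave_density_def)
  obtain e where e: "e \<in> Basis" "\<xi> \<bullet> e \<noteq> 0"
    using \<open>\<xi> \<noteq> 0\<close> euclidean_all_zero_iff by blast
  have "(\<integral>\<^sup>+s. inner_marginal f \<xi> e s \<partial>lborel) = (\<integral>\<^sup>+x. ennreal (f x) \<partial>lborel)"
    using nn_integral_inner_disintegration[of f "\<lambda>_. 1", OF _ _ e] by simp
  then have finite_marginal: "inner_marginal f \<xi> e s < \<infinity>" for s
    using enn_log_concave_real_finite[OF _ inner_marginal_log_concave[OF lc e(2)]] nonzero finite by auto
  show ?thesis
  proof (rule that)
    show "log_concave_density (\<lambda>s. enn2real (inner_marginal f \<xi> e s))"
      using finite_marginal inner_marginal_log_concave[OF lc e(2)] by (intro log_concave_density_enn2real) auto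
    have "density lborel (inner_marginal f \<xi> e) = density lborel (\<lambda>s. ennreal (enn2real (inner_marginal f \<xi> e s)))"
      using finite_marginal by (intro density_cong) (auto simp: less_top[symmetric])
    then show "distr (density lborel (\<lambda>x. ennreal (f x))) borel (\<lambda>x. x \<bullet> \<xi>)
        = density lborel (\<lambda>s. ennreal (enn2real (inner_marginal f \<xi> e s)))"
      using distr_density_inner_eq_inner_marginal[OF _ e] by simp
  qed
qed


lemma isotropic_density_real_iff:
  fixes g :: "real \<Rightarrow> real"
  shows "isotropic_density g \<longleftrightarrow>
    integrable lborel g \<and> integral\<^sup>L lborel g = 1 \<and>
    integrable lborel (\<lambda>x. x * g x) \<and> integral\<^sup>L lborel (\<lambda>x. x * g x) = 0 \<and>
    integrable lborel (\<lambda>x. x * x * g x) \<and> integral\<^sup>L lborel (\<lambda>x. x * x * g x) = 1"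
  by (simp add: isotropic_density_def)

lemma isotropic_density_inner_moments:
  fixes f :: "'a::euclidean_space \<Rightarrow> real"
  assumes iso: "isotropic_density f" and unit: "norm \<xi> = 1"
  shows "integrable lborel (\<lambda>x. (x \<bullet> \<xi>) * f x)" "integral\<^sup>L lborel (\<lambda>x. (x \<bullet> \<xi>) * f x) = 0"
    "integrable lborel (\<lambda>x. (x \<bullet> \<xi>) * (x \<bullet> \<xi>) * f x)"
    "integral\<^sup>L lborel (\<lambda>x. (x \<bullet> \<xi>) * (x \<bullet> \<xi>) * f x) = 1"
proof -
  have mean: "\<And>i. i \<in> Basis \<Longrightarrow> integrable lborel (\<lambda>x. (x \<bullet> i) * f x) \<and> integral\<^sup>L lborel (\<lambda>x. (x \<bullet> i) * f x) = 0"
    and cov: "\<And>i j. i \<in> Basis \<Longrightarrow> j \<in> Basis \<Longrightarrow> integrable lborel (\<lambda>x. (x \<bullet> i) * (x \<bullet> j) * f x) \<and>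
      integral\<^sup>L lborel (\<lambda>x. (x \<bullet> i) * (x \<bullet> j) * f x) = (if i = j then 1 else 0)"
    using iso by (simp_all add: isotropic_density_def)
  have first: "(x \<bullet> \<xi>) * f x = (\<Sum>i\<in>Basis. (\<xi> \<bullet> i) * ((x \<bullet> i) * f x))" for x
    by (simp add: euclidean_inner[of x \<xi>] sum_distrib_right sum_distrib_left algebra_simps)
  show "integrable lborel (\<lambda>x. (x \<bullet> \<xi>) * f x)"
    unfolding first using mean by (intro Bochner_Integration.integrable_sum integrable_mult_right) auto
  show "integral\<^sup>L lborel (\<lambda>x. (x \<bullet> \<xi>) * f x) = 0"
    unfolding first using mean by (subst Bochner_Integration.integral_sum) auto
  have second: "(x \<bullet> \<xi>) * (x \<bullet> \<xi>) * f x
      = (\<Sum>i\<in>Basis. \<Sum>j\<in>Basis. ((\<xi> \<bullet> i) * (\<xi> \<bullet> j)) * ((x \<bullet> i) * (x \<bullet> j) * f x))" for x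
  proof -
    have "(x \<bullet> \<xi>) * (x \<bullet> \<xi>) * f x = (\<Sum>i\<in>Basis. (x \<bullet> i) * (\<xi> \<bullet> i)) * (\<Sum>j\<in>Basis. (x \<bullet> j) * (\<xi> \<bullet> j)) * f x"
      by (simp add: euclidean_inner[of x \<xi>])
    also have "\<dots> = (\<Sum>i\<in>Basis. \<Sum>j\<in>Basis. ((x \<bullet> i) * (\<xi> \<bullet> i)) * ((x \<bullet> j) * (\<xi> \<bullet> j)) * f x)"
      by (simp add: sum_distrib_right sum_distrib_left mult.assoc) (rule sum.swap)
    finally show ?thesis
      by (simp add: algebra_simps)
  qed
  show "integrable lborel (\<lambda>x. (x \<bullet> \<xi>) * (x \<bullet> \<xi>) * f x)"
    unfolding second using cov by (intro Bochner_Integration.integrable_sum integrable_mult_right) auto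
  have "integral\<^sup>L lborel (\<lambda>x. (x \<bullet> \<xi>) * (x \<bullet> \<xi>) * f x)
      = (\<Sum>i\<in>Basis. \<Sum>j\<in>Basis. ((\<xi> \<bullet> i) * (\<xi> \<bullet> j)) * (if i = j then 1 else 0))"
    unfolding second using cov by (simp add: Bochner_Integration.integral_sum Bochner_Integration.integrable_sum)
  also have "\<dots> = \<xi> \<bullet> \<xi>"
    by (simp add: euclidean_inner[of \<xi> \<xi>] if_distrib cong: if_cong)
  also have "\<dots> = 1" using unit by (simp add: power2_norm_eq_inner[symmetric])
  finally show "integral\<^sup>L lborel (\<lambda>x. (x \<bullet> \<xi>) * (x \<bullet> \<xi>) * f x) = 1" .
qed

lemma
  fixes f :: "'a::euclidean_space \<Rightarrow> real" and g :: "real \<Rightarrow> real"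
  assumes push: "distr (density lborel (\<lambda>x. ennreal (f x))) borel h = density lborel (\<lambda>s. ennreal (g s))"
    and [measurable]: "f \<in> borel_measurable borel" "g \<in> borel_measurable borel" "h \<in> borel_measurable borel"
      "\<psi> \<in> borel_measurable borel"
    and nonneg: "\<And>x. 0 \<le> f x" "\<And>s. 0 \<le> g s"
  shows integrable_pushforward_density_iff:
      "integrable lborel (\<lambda>s. \<psi> s * g s) \<longleftrightarrow> integrable lborel (\<lambda>x. \<psi> (h x) * f x)"
    and integral_pushforward_density:
      "integral\<^sup>L lborel (\<lambda>s. \<psi> s * g s) = integral\<^sup>L lborel (\<lambda>x. \<psi> (h x) * f x)"
proof -
  have "integrable lborel (\<lambda>s. \<psi> s * g s) \<longleftrightarrow> integrable (density lborel (\<lambda>s. ennreal (g s))) \<psi>"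
    using nonneg by (simp add: integrable_density mult.commute)
  also have "\<dots> \<longleftrightarrow> integrable (density lborel (\<lambda>x. ennreal (f x))) (\<lambda>x. \<psi> (h x))"
    unfolding push[symmetric] by (rule integrable_distr_eq) auto
  also have "\<dots> \<longleftrightarrow> integrable lborel (\<lambda>x. \<psi> (h x) * f x)"
    using nonneg by (simp add: integrable_density mult.commute)
  finally show "integrable lborel (\<lambda>s. \<psi> s * g s) \<longleftrightarrow> integrable lborel (\<lambda>x. \<psi> (h x) * f x)" .
  have "integral\<^sup>L lborel (\<lambda>s. \<psi> s * g s) = integral\<^sup>L (density lborel (\<lambda>s. ennreal (g s))) \<psi>"
    using nonneg by (simp add: integral_density mult.commute)
  also have "\<dots> = integral\<^sup>L (density lborel (\<lambda>x. ennreal (f x))) (\<lambda>x. \<psi> (h x))"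
    unfolding push[symmetric] by (rule integral_distr) auto
  also have "\<dots> = integral\<^sup>L lborel (\<lambda>x. \<psi> (h x) * f x)"
    using nonneg by (simp add: integral_density mult.commute)
  finally show "integral\<^sup>L lborel (\<lambda>s. \<psi> s * g s) = integral\<^sup>L lborel (\<lambda>x. \<psi> (h x) * f x)" .
qed

lemma isotropic_density_pushforward_inner:
  fixes f :: "'a::euclidean_space \<Rightarrow> real" and g :: "real \<Rightarrow> real"
  assumes "isotropic_density f" "norm \<xi> = 1"
    and push: "distr (density lborel (\<lambda>x. ennreal (f x))) borel (\<lambda>x. x \<bullet> \<xi>) = density lborel (\<lambda>s. ennreal (g s))"
    and [measurable]: "f \<in> borel_measurable borel" "g \<in> borel_measurable borel"
    and nonneg: "\<And>x. 0 \<le> f x" "\<And>s. 0 \<le> g s"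
  shows "isotropic_density g"
proof -
  have pushed: "integrable lborel (\<lambda>s. \<psi> s * g s) \<longleftrightarrow> integrable lborel (\<lambda>x. \<psi> (x \<bullet> \<xi>) * f x)"
    "integral\<^sup>L lborel (\<lambda>s. \<psi> s * g s) = integral\<^sup>L lborel (\<lambda>x. \<psi> (x \<bullet> \<xi>) * f x)"
    if "\<psi> \<in> borel_measurable borel" for \<psi>
    using integrable_pushforward_density_iff[OF push _ _ _ that nonneg]
      integral_pushforward_density[OF push _ _ _ that nonneg] by auto
  have "integrable lborel f" "integral\<^sup>L lborel f = 1"
    using \<open>isotropic_density f\<close> by (simp_all add: isotropic_density_def)
  then show ?thesis
    using pushed[of "\<lambda>_. 1"] pushed[of "\<lambda>s. s"] pushed[of "\<lambda>s. s * s"]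
      isotropic_density_inner_moments[OF assms(1,2)]
    by (simp add: isotropic_density_real_iff mult.assoc)
qed


section \<open>Tail functionals of a log-concave function on the line\<close>

text \<open>Both \<open>u\<close> and \<open>x\<^sub>0 + w\<close> are convex combinations of \<open>x\<^sub>0\<close> and \<open>u + w\<close>, whose weights on
  \<open>u + w\<close> add up to \<open>1\<close>.\<close>
lemma log_concave_density_exchange:
  fixes g :: "real \<Rightarrow> real"
  assumes lc: "log_concave_density g" and "x0 \<le> u" "0 \<le> w"
  shows "g x0 * g (u + w) \<le> g u * g (x0 + w)"
proof (cases "u = x0 \<or> w = 0")
  case True
  then show ?thesis by (auto simp: mult.commute)
next
  case False
  then have "x0 < u" "0 < w" using assms by auto
  define D where "D = u - x0 + w"
  have D: "0 < D" using \<open>x0 < u\<close> \<open>0 < w\<close> by (simp add: D_def)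
  define t1 where "t1 = (u - x0) / D"
  define t2 where "t2 = w / D"
  have t: "t1 \<in> {0<..<1}" "t2 \<in> {0<..<1}" "t1 + t2 = 1"
    using \<open>x0 < u\<close> \<open>0 < w\<close> D by (auto simp: t1_def t2_def D_def divide_less_eq add_divide_distrib[symmetric])
  have nonneg: "0 \<le> g x" for x using lc by (simp add: log_concave_density_def)
  have "t1 * D = u - x0" "t2 * D = w" using D by (simp_all add: t1_def t2_def)
  then have "(1 - t1) * x0 + t1 * (u + w) = u" "(1 - t2) * x0 + t2 * (u + w) = x0 + w"
    by (simp_all add: D_def algebra_simps)
  then have le: "g x0 powr (1 - t1) * g (u + w) powr t1 \<le> g u" "g x0 powr (1 - t2) * g (u + w) powr t2 \<le> g (x0 + w)"
    using lc t unfolding log_concave_density_def by (metis real_scaleR_def)+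
  have "g x0 * g (u + w) = (g x0 powr (1 - t1) * g (u + w) powr t1) * (g x0 powr (1 - t2) * g (u + w) powr t2)"
  proof -
    have "(g x0 powr (1 - t1) * g (u + w) powr t1) * (g x0 powr (1 - t2) * g (u + w) powr t2)
        = (g x0 powr (1 - t1) * g x0 powr (1 - t2)) * (g (u + w) powr t1 * g (u + w) powr t2)"
      by (simp add: ac_simps)
    also have "\<dots> = g x0 powr ((1 - t1) + (1 - t2)) * g (u + w) powr (t1 + t2)"
      by (simp only: powr_add)
    also have "(1 - t1) + (1 - t2) = 1" using t(3) by simp
    also have "t1 + t2 = 1" by (rule t(3))
    finally show ?thesis using nonneg by simp
  qed
  also have "\<dots> \<le> g u * g (x0 + w)"
    using le nonneg by (intro mult_mono) auto
  finally show ?thesis .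
qed

lemma nn_integral_lborel_shift:
  fixes \<psi> :: "real \<Rightarrow> ennreal"
  assumes "\<psi> \<in> borel_measurable borel"
  shows "(\<integral>\<^sup>+ x. \<psi> x \<partial>lborel) = (\<integral>\<^sup>+ x. \<psi> (u + x) \<partial>lborel)"
  using nn_integral_real_affine[OF assms, of 1 u] by simp

lemma nn_integral_lborel_reflect:
  fixes \<psi> :: "real \<Rightarrow> ennreal"
  assumes "\<psi> \<in> borel_measurable borel"
  shows "(\<integral>\<^sup>+ x. \<psi> x \<partial>lborel) = (\<integral>\<^sup>+ x. \<psi> (- x) \<partial>lborel)"
  using nn_integral_real_affine[OF assms, of "-1" 0] by simp

lemma nn_integral_positive_part_from:
  "(\<integral>\<^sup>+ u. ennreal (x - u) * indicator {x0..} u \<partial>lborel) = ennreal ((x - x0)^2 / 2) * indicator {x0..} x"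
proof (cases "x0 \<le> x")
  case True
  have "(\<integral>\<^sup>+ u. ennreal (x - u) * indicator {x0..} u \<partial>lborel) = (\<integral>\<^sup>+ u. ennreal (x - u) * indicator {x0..x} u \<partial>lborel)"
    by (intro nn_integral_cong) (auto split: split_indicator simp: ennreal_neg)
  also have "\<dots> = ennreal (- ((x - x) ^ 2 / 2) - (- ((x - x0)^2 / 2)))"
  proof (rule nn_integral_has_integral_lebesgue')
    show "((\<lambda>u. x - u) has_integral (- ((x - x) ^ 2 / 2) - (- ((x - x0)^2 / 2)))) {x0..x}"
    proof (rule fundamental_theorem_of_calculus[OF True])
      fix u assume "u \<in> {x0..x}"
      have "((\<lambda>u. - ((x - u)^2 / 2)) has_real_derivative (x - u)) (at u within {x0..x})"
        by (auto intro!: derivative_eq_intros simp: power2_eq_square) (simp add: field_simps)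
      then show "((\<lambda>u. - ((x - u)^2 / 2)) has_vector_derivative (x - u)) (at u within {x0..x})"
        by (simp add: has_real_derivative_iff_has_vector_derivative)
    qed
  qed auto
  finally show ?thesis using True by simp
next
  case False
  then show ?thesis
    by (subst nn_integral_cong[where v="\<lambda>_. 0"]) (auto split: split_indicator simp: ennreal_neg)
qed

lemma measurable_pred_greaterThan [measurable (raw)]:
  fixes f h :: "'a \<Rightarrow> real"
  shows "f \<in> borel_measurable M \<Longrightarrow> h \<in> borel_measurable M \<Longrightarrow> Measurable.pred M (\<lambda>x. f x \<in> {h x<..})"
  by simp

lemma measurable_pred_lessThan [measurable (raw)]:
  fixes f h :: "'a \<Rightarrow> real"
  shows "f \<in> borel_measurable M \<Longrightarrow> h \<in> borel_measurable M \<Longrightarrow> Measurable.pred M (\<lambda>x. f x \<in> {..<h x})"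
  by simp

definition tail_mass :: "(real \<Rightarrow> real) \<Rightarrow> real \<Rightarrow> ennreal" where
  "tail_mass g v = (\<integral>\<^sup>+x. ennreal (g x) * indicator {v<..} x \<partial>lborel)"

definition tail_moment1 :: "(real \<Rightarrow> real) \<Rightarrow> real \<Rightarrow> ennreal" where
  "tail_moment1 g u = (\<integral>\<^sup>+x. ennreal (g x) * ennreal (x - u) \<partial>lborel)"

definition tail_moment2 :: "(real \<Rightarrow> real) \<Rightarrow> real \<Rightarrow> ennreal" where
  "tail_moment2 g u = (\<integral>\<^sup>+x. ennreal (g x) * ennreal (x - u) ^ 2 \<partial>lborel)"

locale integrable_log_concave =
  fixes g :: "real \<Rightarrow> real"
  assumes log_concave: "log_concave_density g"
    and finite_mass: "(\<integral>\<^sup>+x. ennreal (g x) \<partial>lborel) < \<infinity>"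
begin

lemma measurable_density [measurable]: "g \<in> borel_measurable borel"
  using log_concave by (simp add: log_concave_density_def)

lemma nonneg: "0 \<le> g x"
  using log_concave by (simp add: log_concave_density_def)

lemma measurable_tail_mass [measurable]: "tail_mass g \<in> borel_measurable borel"
  unfolding tail_mass_def[abs_def] by measurable

lemma measurable_tail_moment1 [measurable]: "tail_moment1 g \<in> borel_measurable borel"
  unfolding tail_moment1_def[abs_def] by measurable

lemma tail_mass_finite: "tail_mass g v < \<infinity>"
proof -
  have "tail_mass g v \<le> (\<integral>\<^sup>+x. ennreal (g x) \<partial>lborel)"
    unfolding tail_mass_def by (intro nn_integral_mono) (auto split: split_indicator)
  then show ?thesis using finite_mass by auto
qed

lemma tail_mass_log_concave:
  assumes t: "0 < t" "t < 1"
  shows "enn_powr (tail_mass g x) (1 - t) * enn_powr (tail_mass g y) t \<le> tail_mass g ((1 - t) * x + t * y)"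
  unfolding tail_mass_def
proof (rule Prekopa_Leindler_real)
  fix a b
  show "enn_powr (ennreal (g a) * indicator {x<..} a) (1 - t) * enn_powr (ennreal (g b) * indicator {y<..} b) t
     \<le> ennreal (g ((1 - t) * a + t * b)) * indicator {(1 - t) * x + t * y<..} ((1 - t) * a + t * b)"
  proof (cases "x < a \<and> y < b")
    case True
    then have "(1 - t) * x + t * y < (1 - t) * a + t * b"
      using t by (intro add_less_le_mono mult_strict_left_mono mult_left_mono) auto
    moreover have "g a powr (1 - t) * g b powr t \<le> g ((1 - t) * a + t * b)"
      using log_concave t unfolding log_concave_density_def by auto
    ultimately show ?thesis using True nonneg
      by (simp add: enn_powr_ennreal ennreal_mult'[symmetric] del: ennreal_mult')
  qed (auto simp: indicator_def)
qed (use t in auto)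

lemma log_concave_density_tail_mass: "log_concave_density (\<lambda>v. enn2real (tail_mass g v))"
  using tail_mass_finite tail_mass_log_concave by (intro log_concave_density_enn2real) auto

lemma tail_mass_eq_shift: "tail_mass g u = (\<integral>\<^sup>+w. ennreal (g (u + w)) * indicator {0<..} w \<partial>lborel)"
  unfolding tail_mass_def
  by (subst nn_integral_lborel_shift[where u=u]) (auto intro!: nn_integral_cong split: split_indicator)

text \<open>The hazard rate \<open>g / tail_mass g\<close> is nondecreasing.\<close>
lemma density_mult_tail_mass_mono:
  assumes "x0 \<le> u"
  shows "ennreal (g x0) * tail_mass g u \<le> ennreal (g u) * tail_mass g x0"
proof -
  have "ennreal (g x0) * tail_mass g u = (\<integral>\<^sup>+w. ennreal (g x0 * g (u + w)) * indicator {0<..} w \<partial>lborel)"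
    unfolding tail_mass_eq_shift[of u] using nonneg
    by (subst nn_integral_cmult[symmetric]) (auto intro!: nn_integral_cong simp: ennreal_mult mult.assoc)
  also have "\<dots> \<le> (\<integral>\<^sup>+w. ennreal (g u * g (x0 + w)) * indicator {0<..} w \<partial>lborel)"
    using log_concave_density_exchange[OF log_concave assms]
    by (intro nn_integral_mono) (auto intro!: ennreal_leI split: split_indicator)
  also have "\<dots> = ennreal (g u) * tail_mass g x0"
    unfolding tail_mass_eq_shift[of x0] using nonneg
    by (subst nn_integral_cmult[symmetric]) (auto intro!: nn_integral_cong simp: ennreal_mult mult.assoc)
  finally show ?thesis .
qed

lemma tail_moment1_eq_integral_tail_mass:
  "tail_moment1 g u = (\<integral>\<^sup>+v. tail_mass g v * indicator {u..} v \<partial>lborel)"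
proof -
  have length: "ennreal (x - u) = (\<integral>\<^sup>+v. indicator {u..} v * indicator {..<x} v \<partial>lborel)" for x
  proof -
    have "(\<integral>\<^sup>+v. indicator {u..} v * indicator {..<x} v \<partial>lborel) = (\<integral>\<^sup>+v. indicator {u..<x} v \<partial>lborel)"
      by (intro nn_integral_cong) (auto split: split_indicator)
    then show ?thesis by (cases "u \<le> x") (auto simp: ennreal_neg)
  qed
  have "tail_moment1 g u
      = (\<integral>\<^sup>+x. \<integral>\<^sup>+v. ennreal (g x) * (indicator {u..} v * indicator {..<x} v) \<partial>lborel \<partial>lborel)"
    unfolding tail_moment1_def length by (intro nn_integral_cong) (subst nn_integral_cmult, auto)
  also have "\<dots> = (\<integral>\<^sup>+v. \<integral>\<^sup>+x. ennreal (g x) * (indicator {u..} v * indicator {..<x} v) \<partial>lborel \<partial>lborel)"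
    by (rule lborel_pair.Fubini') measurable
  also have "\<dots> = (\<integral>\<^sup>+v. tail_mass g v * indicator {u..} v \<partial>lborel)"
    unfolding tail_mass_def
    by (intro nn_integral_cong) (subst nn_integral_multc[symmetric], auto intro!: nn_integral_cong split: split_indicator)
  finally show ?thesis .
qed

lemma tail_mass_closed: "(\<integral>\<^sup>+x. ennreal (g x) * indicator {v..} x \<partial>lborel) = tail_mass g v"
  unfolding tail_mass_def
  by (intro nn_integral_cong_AE) (use AE_lborel_singleton[of v] in \<open>auto split: split_indicator\<close>)

lemma density_mult_tail_moment1_le: "ennreal (g x0) * tail_moment1 g x0 \<le> tail_mass g x0 ^ 2"
proof -
  have "ennreal (g x0) * tail_moment1 g x0 = (\<integral>\<^sup>+v. ennreal (g x0) * tail_mass g v * indicator {x0..} v \<partial>lborel)"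
    unfolding tail_moment1_eq_integral_tail_mass by (subst nn_integral_cmult[symmetric]) (auto simp: mult.assoc)
  also have "\<dots> \<le> (\<integral>\<^sup>+v. tail_mass g x0 * (ennreal (g v) * indicator {x0..} v) \<partial>lborel)"
    using density_mult_tail_mass_mono[of x0]
    by (intro nn_integral_mono) (auto split: split_indicator simp: mult.commute)
  also have "\<dots> = tail_mass g x0 ^ 2"
    by (subst nn_integral_cmult) (auto simp: tail_mass_closed power2_eq_square)
  finally show ?thesis .
qed

lemma tail_moment1_eq_shift: "tail_moment1 g u = (\<integral>\<^sup>+w. tail_mass g (u + w) * indicator {0..} w \<partial>lborel)"
  unfolding tail_moment1_eq_integral_tail_mass
  by (subst nn_integral_lborel_shift[where u=u]) (auto intro!: nn_integral_cong split: split_indicator)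

text \<open>New-better-than-used in expectation, from the log-concavity of the tail mass.\<close>
lemma tail_mass_mult_tail_moment1_mono:
  assumes "x0 \<le> u"
  shows "tail_mass g x0 * tail_moment1 g u \<le> tail_mass g u * tail_moment1 g x0"
proof -
  have T: "tail_mass g v = ennreal (enn2real (tail_mass g v))" for v
    using tail_mass_finite[of v] by simp
  have "tail_mass g x0 * tail_moment1 g u = (\<integral>\<^sup>+w. tail_mass g x0 * tail_mass g (u + w) * indicator {0..} w \<partial>lborel)"
    unfolding tail_moment1_eq_shift[of u] by (subst nn_integral_cmult[symmetric]) (auto simp: mult.assoc)
  also have "\<dots> \<le> (\<integral>\<^sup>+w. tail_mass g u * tail_mass g (x0 + w) * indicator {0..} w \<partial>lborel)"
  proof (intro nn_integral_mono)
    fix w :: real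
    have "0 \<le> w \<Longrightarrow> tail_mass g x0 * tail_mass g (u + w) \<le> tail_mass g u * tail_mass g (x0 + w)"
      using log_concave_density_exchange[OF log_concave_density_tail_mass assms, of w]
      by (subst (1 2 3 4) T) (simp add: ennreal_mult[symmetric] ennreal_leI)
    then show "tail_mass g x0 * tail_mass g (u + w) * indicator {0..} w \<le> tail_mass g u * tail_mass g (x0 + w) * indicator {0..} w"
      by (simp split: split_indicator)
  qed
  also have "\<dots> = tail_mass g u * tail_moment1 g x0"
    unfolding tail_moment1_eq_shift[of x0] by (subst nn_integral_cmult[symmetric]) (auto simp: mult.assoc)
  finally show ?thesis .
qed

lemma tail_moment2_eq_integral_tail_moment1:
  "tail_moment2 g x0 = 2 * (\<integral>\<^sup>+u. tail_moment1 g u * indicator {x0..} u \<partial>lborel)"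
proof -
  have square: "ennreal (x - x0) ^ 2 = 2 * (\<integral>\<^sup>+u. ennreal (x - u) * indicator {x0..} u \<partial>lborel)" for x
  proof (cases "x0 \<le> x")
    case True
    have "ennreal (2 * ((x - x0)^2 / 2)) = ennreal 2 * ennreal ((x - x0)^2 / 2)"
      by (rule ennreal_mult) auto
    then show ?thesis unfolding nn_integral_positive_part_from using True
      by (simp add: ennreal_power)
  qed (simp add: nn_integral_positive_part_from ennreal_neg)
  have "tail_moment2 g x0 = (\<integral>\<^sup>+x. 2 * \<integral>\<^sup>+u. ennreal (g x) * (ennreal (x - u) * indicator {x0..} u) \<partial>lborel \<partial>lborel)"
    unfolding tail_moment2_def square
    by (intro nn_integral_cong) (subst nn_integral_cmult, auto simp: ac_simps)
  also have "\<dots> = 2 * (\<integral>\<^sup>+x. \<integral>\<^sup>+u. ennreal (g x) * (ennreal (x - u) * indicator {x0..} u) \<partial>lborel \<partial>lborel)"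
    by (subst nn_integral_cmult) auto
  also have "(\<integral>\<^sup>+x. \<integral>\<^sup>+u. ennreal (g x) * (ennreal (x - u) * indicator {x0..} u) \<partial>lborel \<partial>lborel)
      = (\<integral>\<^sup>+u. \<integral>\<^sup>+x. ennreal (g x) * (ennreal (x - u) * indicator {x0..} u) \<partial>lborel \<partial>lborel)"
    by (rule lborel_pair.Fubini') measurable
  also have "\<dots> = (\<integral>\<^sup>+u. tail_moment1 g u * indicator {x0..} u \<partial>lborel)"
    unfolding tail_moment1_def
    by (intro nn_integral_cong) (subst nn_integral_multc[symmetric], auto simp: ac_simps)
  finally show ?thesis .
qed

lemma tail_mass_mult_tail_moment2_le: "tail_mass g x0 * tail_moment2 g x0 \<le> 2 * tail_moment1 g x0 ^ 2"
proof -
  have "tail_mass g x0 * tail_moment2 g x0 = 2 * (\<integral>\<^sup>+u. tail_mass g x0 * (tail_moment1 g u * indicator {x0..} u) \<partial>lborel)"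
    unfolding tail_moment2_eq_integral_tail_moment1 by (subst nn_integral_cmult) (auto simp: ac_simps)
  also have "\<dots> \<le> 2 * (\<integral>\<^sup>+u. tail_moment1 g x0 * (tail_mass g u * indicator {x0..} u) \<partial>lborel)"
    using tail_mass_mult_tail_moment1_mono
    by (intro mult_left_mono nn_integral_mono) (auto split: split_indicator simp: mult.commute)
  also have "\<dots> = 2 * tail_moment1 g x0 ^ 2"
    by (subst nn_integral_cmult) (auto simp: tail_moment1_eq_integral_tail_mass[of x0] power2_eq_square mult.assoc)
  finally show ?thesis .
qed

lemma tail_moment2_eq_0:
  assumes "tail_mass g x0 = 0"
  shows "tail_moment2 g x0 = 0"
proof -
  have "AE x in lborel. ennreal (g x) * indicator {x0<..} x = 0"
    using assms unfolding tail_mass_def by (subst nn_integral_0_iff_AE[symmetric]) auto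
  then have "AE x in lborel. x0 < x \<longrightarrow> g x = 0"
    by eventually_elim (auto split: split_indicator simp: ennreal_eq_0_iff intro: antisym[OF _ nonneg])
  then show ?thesis unfolding tail_moment2_def
    by (subst nn_integral_0_iff_AE) (auto elim!: eventually_mono simp: ennreal_neg)
qed

lemma tail_inequalities_real:
  assumes "0 < g x0" "tail_moment2 g x0 < \<infinity>"
  defines "P \<equiv> enn2real (tail_mass g x0)" and "M1 \<equiv> enn2real (tail_moment1 g x0)"
    and "M2 \<equiv> enn2real (tail_moment2 g x0)"
  shows "g x0 * M1 \<le> P^2" "P * M2 \<le> 2 * M1^2" "P = 0 \<Longrightarrow> M2 = 0"
proof -
  have P: "tail_mass g x0 = ennreal P"
    using tail_mass_finite by (simp add: P_def)
  have "ennreal (g x0) * tail_moment1 g x0 < \<infinity>"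
    using density_mult_tail_moment1_le[of x0] tail_mass_finite[of x0]
    by (simp add: le_less_trans power_less_top_ennreal)
  then have M1: "tail_moment1 g x0 = ennreal M1"
    using \<open>0 < g x0\<close> by (auto simp: M1_def ennreal_mult_less_top)
  have M2: "tail_moment2 g x0 = ennreal M2"
    using \<open>tail_moment2 g x0 < \<infinity>\<close> by (simp add: M2_def)
  have nonneg: "0 \<le> P" "0 \<le> M1" "0 \<le> M2" by (simp_all add: P_def M1_def M2_def)
  show "g x0 * M1 \<le> P^2"
    using density_mult_tail_moment1_le[of x0] nonneg \<open>0 < g x0\<close>
    by (simp add: P M1 ennreal_mult[symmetric] ennreal_power)
  show "P * M2 \<le> 2 * M1^2"
    using tail_mass_mult_tail_moment2_le[of x0] nonneg
    by (simp add: P M1 M2 ennreal_mult[symmetric] ennreal_power ennreal_numeral[symmetric] del: ennreal_numeral)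
  show "P = 0 \<Longrightarrow> M2 = 0"
    using tail_moment2_eq_0[of x0] by (simp add: P M2_def)
qed

end


section \<open>Isotropic log-concave densities on the line are bounded by one\<close>

lemma log_concave_density_reflect:
  fixes g :: "real \<Rightarrow> real"
  assumes "log_concave_density g"
  shows "log_concave_density (\<lambda>x. g (- x))"
  unfolding log_concave_density_def
proof (intro conjI allI ballI)
  have [measurable]: "g \<in> borel_measurable borel"
    using assms by (simp add: log_concave_density_def)
  then show "(\<lambda>x. g (- x)) \<in> borel_measurable lborel"
    by simp
  show "0 \<le> g (- x)" for x
    using assms by (simp add: log_concave_density_def)
  fix x y t :: real assume "t \<in> {0<..<1}"
  then have "g (- x) powr (1 - t) * g (- y) powr t \<le> g ((1 - t) *\<^sub>R (- x) + t *\<^sub>R (- y))"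
    using assms unfolding log_concave_density_def by blast
  then show "g (- x) powr (1 - t) * g (- y) powr t \<le> g (- ((1 - t) *\<^sub>R x + t *\<^sub>R y))"
    by (simp add: algebra_simps)
qed

lemma
  fixes g :: "real \<Rightarrow> real"
  assumes [measurable]: "g \<in> borel_measurable borel"
  shows tail_mass_reflect: "tail_mass (\<lambda>x. g (- x)) (- v) = (\<integral>\<^sup>+x. ennreal (g x) * indicator {..<v} x \<partial>lborel)"
    and tail_moment1_reflect: "tail_moment1 (\<lambda>x. g (- x)) (- v) = (\<integral>\<^sup>+x. ennreal (g x) * ennreal (v - x) \<partial>lborel)"
    and tail_moment2_reflect: "tail_moment2 (\<lambda>x. g (- x)) (- v) = (\<integral>\<^sup>+x. ennreal (g x) * ennreal (v - x) ^ 2 \<partial>lborel)"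
  unfolding tail_mass_def tail_moment1_def tail_moment2_def
  by (subst (2) nn_integral_lborel_reflect; auto intro!: nn_integral_cong split: split_indicator simp: add.commute)+

context
  fixes g :: "real \<Rightarrow> real"
  assumes iso: "isotropic_density g" and [measurable]: "g \<in> borel_measurable borel"
    and nonneg: "\<And>x. 0 \<le> g x"
begin

lemma isotropic_density_real_moments:
  "integrable lborel g" "integrable lborel (\<lambda>x. x * g x)" "integrable lborel (\<lambda>x. x * x * g x)"
  "integral\<^sup>L lborel g = 1" "integral\<^sup>L lborel (\<lambda>x. x * g x) = 0" "integral\<^sup>L lborel (\<lambda>x. x * x * g x) = 1"
  using iso by (simp_all add: isotropic_density_real_iff)

lemma isotropic_tail_mass_two_sided:
  "tail_mass g v + tail_mass (\<lambda>x. g (- x)) (- v) = 1"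
proof -
  have "tail_mass g v + tail_mass (\<lambda>x. g (- x)) (- v)
      = tail_mass g v + (\<integral>\<^sup>+x. ennreal (g x) * indicator {..<v} x \<partial>lborel)"
    by (simp add: tail_mass_reflect)
  also have "\<dots> = (\<integral>\<^sup>+x. ennreal (g x) * indicator {v<..} x + ennreal (g x) * indicator {..<v} x \<partial>lborel)"
    unfolding tail_mass_def by (subst nn_integral_add) auto
  also have "\<dots> = (\<integral>\<^sup>+x. ennreal (g x) \<partial>lborel)"
    by (intro nn_integral_cong_AE) (use AE_lborel_singleton[of v] in \<open>auto split: split_indicator\<close>)
  also have "\<dots> = 1"
    using isotropic_density_real_moments nonneg by (simp add: nn_integral_eq_integral)
  finally show ?thesis .
qed

lemma isotropic_tail_moment2_two_sided:
  "tail_moment2 g v + tail_moment2 (\<lambda>x. g (- x)) (- v) = ennreal (1 + v^2)"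
proof -
  have square: "x * x * g x - 2 * v * (x * g x) + v^2 * g x = g x * (x - v)^2" for x
    by (simp add: algebra_simps power2_eq_square)
  have "tail_moment2 g v + tail_moment2 (\<lambda>x. g (- x)) (- v)
      = tail_moment2 g v + (\<integral>\<^sup>+x. ennreal (g x) * ennreal (v - x) ^ 2 \<partial>lborel)"
    by (simp add: tail_moment2_reflect)
  also have "\<dots> = (\<integral>\<^sup>+x. ennreal (g x) * ennreal (x - v) ^ 2 + ennreal (g x) * ennreal (v - x) ^ 2 \<partial>lborel)"
    unfolding tail_moment2_def by (subst nn_integral_add) auto
  also have "\<dots> = (\<integral>\<^sup>+x. ennreal (x * x * g x - 2 * v * (x * g x) + v^2 * g x) \<partial>lborel)"
  proof (intro nn_integral_cong)
    fix x
    show "ennreal (g x) * ennreal (x - v) ^ 2 + ennreal (g x) * ennreal (v - x) ^ 2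
        = ennreal (x * x * g x - 2 * v * (x * g x) + v^2 * g x)"
      unfolding square using nonneg[of x]
      by (cases "v \<le> x") (auto simp: ennreal_neg ennreal_power ennreal_mult[symmetric] power2_commute)
  qed
  also have "\<dots> = ennreal (integral\<^sup>L lborel (\<lambda>x. x * x * g x - 2 * v * (x * g x) + v^2 * g x))"
  proof (rule nn_integral_eq_integral)
    show "integrable lborel (\<lambda>x. x * x * g x - 2 * v * (x * g x) + v^2 * g x)"
      using isotropic_density_real_moments by auto
  qed (simp add: square nonneg)
  also have "integral\<^sup>L lborel (\<lambda>x. x * x * g x - 2 * v * (x * g x) + v^2 * g x) = 1 + v^2"
    using isotropic_density_real_moments by simp
  finally show ?thesis .
qed

lemma isotropic_tail_moment1_two_sided:
  "enn2real (tail_moment1 g v) - enn2real (tail_moment1 (\<lambda>x. g (- x)) (- v)) = - v"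
proof -
  have "integrable lborel (\<lambda>x. x * g x - v * g x)"
    using isotropic_density_real_moments by auto
  then have "integral\<^sup>L lborel (\<lambda>x. x * g x - v * g x)
      = enn2real (\<integral>\<^sup>+x. ennreal (x * g x - v * g x) \<partial>lborel) - enn2real (\<integral>\<^sup>+x. ennreal (- (x * g x - v * g x)) \<partial>lborel)"
    by (rule real_lebesgue_integral_def)
  also have "(\<integral>\<^sup>+x. ennreal (x * g x - v * g x) \<partial>lborel) = tail_moment1 g v"
    unfolding tail_moment1_def using nonneg
    by (intro nn_integral_cong) (simp add: ennreal_mult'[symmetric] algebra_simps)
  also have "(\<integral>\<^sup>+x. ennreal (- (x * g x - v * g x)) \<partial>lborel) = tail_moment1 (\<lambda>x. g (- x)) (- v)"
    unfolding tail_moment1_reflect[OF \<open>g \<in> borel_measurable borel\<close>] using nonneg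
    by (intro nn_integral_cong) (simp add: ennreal_mult'[symmetric] algebra_simps)
  finally show ?thesis
    using isotropic_density_real_moments by simp
qed

end

text \<open>All the mass on one side of \<open>x\<^sub>0\<close>: then \<open>M\<^sub>2 - M\<^sub>1\<^sup>2\<close> is the variance, which forces \<open>M\<^sub>1 \<ge> 1\<close>.\<close>
lemma one_sided_density_le_1:
  fixes m M1 M2 :: real
  assumes "0 < m" "0 \<le> M1" "m * M1 \<le> 1" "M2 \<le> 2 * M1^2" "M2 - M1^2 = 1"
  shows "m \<le> 1"
proof -
  have "1 \<le> M1^2" using assms(4,5) by simp
  then have "1 \<le> M1" using power2_le_imp_le[of 1 M1] assms(2) by simp
  then have "m \<le> m * M1" using assms(1) by simp
  then show ?thesis using assms(3) by simp
qed

lemma two_sided_tail_quadratic_le_1: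
  fixes P Q a b :: real
  assumes PQ: "0 < P" "0 < Q" "P + Q = 1" and a: "0 \<le> a" "a \<le> P^2" and b: "0 \<le> b" "b \<le> Q^2"
  shows "2 * a^2 / P + 2 * b^2 / Q - (a - b)^2 \<le> 1"
proof -
  define \<alpha> where "\<alpha> = a / P^2"
  define \<beta> where "\<beta> = b / Q^2"
  have \<alpha>: "0 \<le> \<alpha>" "\<alpha> \<le> 1" using a PQ by (auto simp: \<alpha>_def divide_le_eq)
  have \<beta>: "0 \<le> \<beta>" "\<beta> \<le> 1" using b PQ by (auto simp: \<beta>_def divide_le_eq)
  define A where "A = 2 * P^3 - P^4"
  define B where "B = 2 * Q^3 - Q^4"
  define C where "C = P^2 * Q^2"
  have "P^4 \<le> P^3" "Q^4 \<le> Q^3" "0 \<le> P^3" "0 \<le> Q^3" using PQ by (simp_all add: power_decreasing)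
  then have A: "0 \<le> A" and B: "0 \<le> B" unfolding A_def B_def by linarith+
  have "2 * a^2 / P + 2 * b^2 / Q - (a - b)^2 = \<alpha>^2 * A + \<beta>^2 * B + 2 * (\<alpha> * \<beta>) * C"
    using PQ by (simp add: \<alpha>_def \<beta>_def A_def B_def C_def field_simps power2_eq_square power3_eq_cube power4_eq_xxxx)
  also have "\<dots> \<le> A + B + 2 * C"
  proof -
    have "\<alpha>^2 * A \<le> A" "\<beta>^2 * B \<le> B" "(\<alpha> * \<beta>) * C \<le> C"
      using \<alpha> \<beta> A B by (simp_all add: C_def mult_left_le_one_le power_le_one mult_le_one)
    then show ?thesis by linarith
  qed
  also have "A + B + 2 * C = 1 - 2 * P * Q"
    unfolding A_def B_def C_def using PQ(3) by algebra
  also have "\<dots> \<le> 1" using PQ by simp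
  finally show ?thesis .
qed

text \<open>The density value \<open>m = g x\<^sub>0\<close> against the tail masses \<open>P, Q\<close>, first tail moments \<open>R\<^sub>1, L\<^sub>1\<close> and
  second tail moments \<open>R\<^sub>2, L\<^sub>2\<close> on the two sides of \<open>x\<^sub>0\<close>; the last hypothesis says the variance is \<open>1\<close>.\<close>
lemma density_le_1_of_tail_inequalities:
  fixes P Q m R1 L1 R2 L2 :: real
  assumes PQ: "0 \<le> P" "0 \<le> Q" "P + Q = 1" and m: "0 < m"
    and nonneg: "0 \<le> R1" "0 \<le> L1" "0 \<le> R2" "0 \<le> L2"
    and first: "m * R1 \<le> P^2" "m * L1 \<le> Q^2"
    and second: "P * R2 \<le> 2 * R1^2" "Q * L2 \<le> 2 * L1^2"
    and empty: "P = 0 \<Longrightarrow> R2 = 0" "Q = 0 \<Longrightarrow> L2 = 0"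
    and variance: "R2 + L2 - (R1 - L1)^2 = 1"
  shows "m \<le> 1"
proof (cases "P = 0 \<or> Q = 0")
  case True
  then consider "P = 0" "Q = 1" | "Q = 0" "P = 1" using PQ by linarith
  then show ?thesis
  proof cases
    case 1
    then have "R1 = 0" using first(1) m nonneg(1) by (simp add: mult_le_0_iff)
    with 1 show ?thesis
      using one_sided_density_le_1[of m L1 L2] m nonneg first(2) second(2) empty(1) variance by simp
  next
    case 2
    then have "L1 = 0" using first(2) m nonneg(2) by (simp add: mult_le_0_iff)
    with 2 show ?thesis
      using one_sided_density_le_1[of m R1 R2] m nonneg first(1) second(1) empty(2) variance by simp
  qed
next
  case False
  then have P: "0 < P" and Q: "0 < Q" using PQ by auto
  define a where "a = m * R1"
  define b where "b = m * L1"
  have "P * (m^2 * R2) \<le> 2 * a^2" "Q * (m^2 * L2) \<le> 2 * b^2"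
    using second m by (simp_all add: a_def b_def power_mult_distrib)
  then have "m^2 * R2 \<le> 2 * a^2 / P" "m^2 * L2 \<le> 2 * b^2 / Q"
    using P Q by (simp_all add: le_divide_eq mult.commute)
  have "m^2 * (R2 + L2) - (a - b)^2 = m^2 * (R2 + L2 - (R1 - L1)^2)"
    by (simp add: a_def b_def algebra_simps power2_eq_square)
  then have "m^2 = m^2 * (R2 + L2) - (a - b)^2"
    using variance by simp
  also have "\<dots> \<le> 2 * a^2 / P + 2 * b^2 / Q - (a - b)^2"
    using \<open>m^2 * R2 \<le> 2 * a^2 / P\<close> \<open>m^2 * L2 \<le> 2 * b^2 / Q\<close> by (simp add: algebra_simps)
  also have "\<dots> \<le> 1"
    using two_sided_tail_quadratic_le_1[OF P Q PQ(3), of a b] first nonneg m by (auto simp: a_def b_def)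
  finally have "m^2 \<le> 1" .
  then show ?thesis using m by (simp add: power_le_one_iff abs_le_iff)
qed

theorem log_concave_isotropic_density_le_1:
  fixes g :: "real \<Rightarrow> real"
  assumes lc: "log_concave_density g" and iso: "isotropic_density g"
  shows "g x0 \<le> 1"
proof (cases "g x0 = 0")
  case False
  have [measurable]: "g \<in> borel_measurable borel" and nonneg: "\<And>x. 0 \<le> g x"
    using lc by (simp_all add: log_concave_density_def)
  have g0: "0 < g x0" using False nonneg[of x0] by simp
  have mass: "tail_mass g x0 + tail_mass (\<lambda>x. g (- x)) (- x0) = 1"
    and second: "tail_moment2 g x0 + tail_moment2 (\<lambda>x. g (- x)) (- x0) = ennreal (1 + x0^2)"
    and first: "enn2real (tail_moment1 g x0) - enn2real (tail_moment1 (\<lambda>x. g (- x)) (- x0)) = - x0"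
    using isotropic_tail_mass_two_sided isotropic_tail_moment2_two_sided isotropic_tail_moment1_two_sided
      iso nonneg by auto
  have total: "(\<integral>\<^sup>+x. ennreal (g x) \<partial>lborel) = 1"
    using isotropic_density_real_moments[OF iso] nonneg by (simp add: nn_integral_eq_integral)
  interpret R: integrable_log_concave g
    using lc total by unfold_locales auto
  interpret L: integrable_log_concave "\<lambda>x. g (- x)"
    using log_concave_density_reflect[OF lc] total nn_integral_lborel_reflect[of "\<lambda>x. ennreal (g x)"]
    by unfold_locales auto
  have sum_enn2real: "enn2real a + enn2real b = enn2real (a + b)" if "a < \<infinity>" "b < \<infinity>" for a b :: ennreal
    using that by (simp add: enn2real_plus)
  have "tail_moment2 g x0 + tail_moment2 (\<lambda>x. g (- x)) (- x0) \<noteq> \<infinity>"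
    using second by simp
  then have finite2: "tail_moment2 g x0 < \<infinity>" "tail_moment2 (\<lambda>x. g (- x)) (- x0) < \<infinity>"
    by (simp_all add: less_top[symmetric])
  show ?thesis
  proof (rule density_le_1_of_tail_inequalities)
    show "enn2real (tail_mass g x0) + enn2real (tail_mass (\<lambda>x. g (- x)) (- x0)) = 1"
      using mass R.tail_mass_finite L.tail_mass_finite by (simp add: sum_enn2real)
    show "enn2real (tail_moment2 g x0) + enn2real (tail_moment2 (\<lambda>x. g (- x)) (- x0))
        - (enn2real (tail_moment1 g x0) - enn2real (tail_moment1 (\<lambda>x. g (- x)) (- x0)))^2 = 1"
      using second first finite2 by (simp add: sum_enn2real del: ennreal_plus)
  qed (use g0 R.tail_inequalities_real[OF g0 finite2(1)] L.tail_inequalities_real[of "- x0"] finite2 in auto)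
qed simp


section \<open>Slabs and the minimal width\<close>

lemma emeasure_isotropic_log_concave_inner_vimage_le:
  fixes f :: "'a::euclidean_space \<Rightarrow> real"
  assumes lc: "log_concave_density f" and iso: "isotropic_density f" and unit: "norm \<xi> = 1"
    and [measurable]: "S \<in> sets borel"
  shows "emeasure (density lborel (\<lambda>x. ennreal (f x))) {x. x \<bullet> \<xi> \<in> S} \<le> emeasure lborel S"
proof -
  have [measurable]: "f \<in> borel_measurable borel" and nonneg: "\<And>x. 0 \<le> f x"
    using lc by (simp_all add: log_concave_density_def)
  have "(\<integral>\<^sup>+x. ennreal (f x) \<partial>lborel) = 1"
    using iso nonneg by (simp add: isotropic_density_def nn_integral_eq_integral)
  moreover have "\<xi> \<noteq> 0" using unit by auto
  ultimately obtain g :: "real \<Rightarrow> real" where g: "log_concave_density g"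
    and push: "distr (density lborel (\<lambda>x. ennreal (f x))) borel (\<lambda>x. x \<bullet> \<xi>) = density lborel (\<lambda>s. ennreal (g s))"
    using log_concave_density_pushforward_inner[OF lc] by auto
  have [measurable]: "g \<in> borel_measurable borel" and g_nonneg: "\<And>s. 0 \<le> g s"
    using g by (simp_all add: log_concave_density_def)
  have "isotropic_density g"
    using iso unit push nonneg g_nonneg by (intro isotropic_density_pushforward_inner) auto
  then have g_le_1: "g s \<le> 1" for s
    using g by (intro log_concave_isotropic_density_le_1)
  have "emeasure (density lborel (\<lambda>x. ennreal (f x))) {x. x \<bullet> \<xi> \<in> S}
      = emeasure (distr (density lborel (\<lambda>x. ennreal (f x))) borel (\<lambda>x. x \<bullet> \<xi>)) S"
    by (subst emeasure_distr) (auto intro!: arg_cong2[where f=emeasure])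
  also have "\<dots> = (\<integral>\<^sup>+s. ennreal (g s) * indicator S s \<partial>lborel)"
    by (simp add: push emeasure_density)
  also have "\<dots> \<le> (\<integral>\<^sup>+s. indicator S s \<partial>lborel)"
    using g_le_1 by (intro nn_integral_mono) (simp split: split_indicator)
  finally show ?thesis by simp
qed

lemma inner_le_support_fun:
  assumes "compact A" "x \<in> A"
  shows "\<xi> \<bullet> x \<le> support_fun A \<xi>"
proof -
  obtain B where "\<forall>y\<in>A. norm y \<le> B"
    using compact_imp_bounded[OF assms(1)] by (auto simp: bounded_iff)
  then have "\<xi> \<bullet> y \<le> norm \<xi> * B" if "y \<in> A" for y
    using that by (metis Cauchy_Schwarz_ineq2 abs_le_D1 mult_left_mono norm_ge_zero order_trans)
  then have "bdd_above ((\<lambda>y. \<xi> \<bullet> y) ` A)" by (rule bdd_aboveI2)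
  then show ?thesis unfolding support_fun_def using assms(2) by (rule cSUP_upper2) simp
qed

lemma compact_subset_inner_slab:
  assumes "compact A"
  shows "A \<subseteq> {x. x \<bullet> \<xi> \<in> {- support_fun A (- \<xi>)..support_fun A \<xi>}}"
  using inner_le_support_fun[OF assms, of _ \<xi>] inner_le_support_fun[OF assms, of _ "- \<xi>"]
  by (force simp: inner_commute)

lemma isotropic_log_concave_measure_le_width:
  fixes f :: "'a::euclidean_space \<Rightarrow> real"
  assumes "log_concave_density f" "isotropic_density f" "norm \<xi> = 1" "compact A" "A \<noteq> {}"
  shows "measure (density lborel (\<lambda>x. ennreal (f x))) A \<le> width A \<xi>"
proof -
  define I where "I = {- support_fun A (- \<xi>)..support_fun A \<xi>}"
  have slab: "A \<subseteq> {x. x \<bullet> \<xi> \<in> I}"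
    unfolding I_def using compact_subset_inner_slab[OF \<open>compact A\<close>] .
  then have "- support_fun A (- \<xi>) \<le> support_fun A \<xi>"
    using \<open>A \<noteq> {}\<close> by (fastforce simp: I_def)
  then have "0 \<le> width A \<xi>" and width: "emeasure lborel I = ennreal (width A \<xi>)"
    by (simp_all add: I_def width_def add.commute)
  have "emeasure (density lborel (\<lambda>x. ennreal (f x))) A \<le> emeasure (density lborel (\<lambda>x. ennreal (f x))) {x. x \<bullet> \<xi> \<in> I}"
    using slab by (intro emeasure_mono) (auto simp: I_def)
  also have "\<dots> \<le> ennreal (width A \<xi>)"
    using emeasure_isotropic_log_concave_inner_vimage_le[OF assms(1-3), of I] width by (simp add: I_def)
  finally show ?thesis
    unfolding measure_def using \<open>0 \<le> width A \<xi>\<close> by (rule enn2real_leI[rotated])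
qed

theorem lemma4p1:
  fixes f :: "'a::euclidean_space \<Rightarrow> real" and A :: "'a set"
  assumes "log_concave_density f"
    and "isotropic_density f"
    and "convex_body A"
  shows "measure (density lborel (\<lambda>x. ennreal (f x))) A \<le> min_width A"
proof -
  have "compact A" "A \<noteq> {}" using assms(3) by (auto simp: convex_body_def)
  then have "measure (density lborel (\<lambda>x. ennreal (f x))) A \<le> width A \<xi>" if "\<xi> \<in> sphere 0 1" for \<xi>
    using isotropic_log_concave_measure_le_width[OF assms(1,2)] that by simp
  then show ?thesis
    unfolding min_width_def by (intro cINF_greatest) simp_all
qed

end
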